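(* Let $S$ be a dense subsemigroup of $((0,\infty),+)$, let $(X,\langle T_s\rangle_{s\in S})$ be a dynamical system and let $x,y\in X$. There is an idempotent $u\in K(O^{+}(S))$ such that $T_u(x)=y$ if and only if $y$ is uniformly recurrent near zero and $x$ and $y$ are proximal near zero.
   Context: "Dense" means dense in the usual topology of $(0,\infty)$. $\beta S$ is the Stone–Čech compactification of the discrete set $S$ (ultrafilters on $S$), with $+$ extended so that $(\beta S,+)$ is a compact right topological semigroup: $A\in p+q$ iff $\{x\in S:-x+A\in q\}\in p$, where $-x+A=\{y\in S:x+y\in A\}$. $O^{+}(S)=\{p\in\beta S: S\cap(0,\epsilon)\in p\text{ for every }\epsilon>0\}$, a compact right topological subsemigroup of $\beta S$; $K(O^{+}(S))$ denotes its smallest two-sided ideal. A dynamical system $(X,\langle T_s\rangle_{s\in S})$ consists of a compact Hausdorff space $X$ and continuous maps $T_s:X\to X$ with $T_s\circ T_t=T_{s+t}$. For $p\in\beta S$, $T_p(x)=p\text{-}\lim_{s\in S}T_s(x)$; $T_p\circ T_q=T_{p+q}$. A subset $B\subseteq S$ is syndetic near zero iff for every $\epsilon>0$ there exist a finite nonempty $F\subseteq (0,\epsilon)\cap S$ and $\delta>0$ with $S\cap(0,\delta)\subseteq\bigcup_{t\in F}(-t+B)$. A point $y$ is uniformly recurrent near zero iff for each neighbourhood $W$ of $y$, $\{s\in S:T_s(y)\in W\}$ is syndetic near zero. Points $x,y$ are proximal near zero iff for every neighbourhood $U$ of the diagonal in $X\times X$ and every $\epsilon>0$ there is $s\in S\cap(0,\epsilon)$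 with $(T_s(x),T_s(y))\in U$. *)

theory Defs
  imports "HOL-Analysis.Analysis"
begin

definition dense_subsemigroup :: "real set \<Rightarrow> bool" where
  "dense_subsemigroup S \<longleftrightarrow> S \<subseteq> {0<..} \<and> (\<forall>a\<in>S. \<forall>b\<in>S. a + b \<in> S)
     \<and> {0<..} \<subseteq> closure S"

text \<open>Points of beta S: ultrafilters on S, represented as sets of subsets of S.\<close>
definition ultrafilter_on :: "real set \<Rightarrow> real set set \<Rightarrow> bool" where
  "ultrafilter_on S p \<longleftrightarrow> (\<forall>A\<in>p. A \<subseteq> S) \<and> S \<in> p \<and> {} \<notin> p
     \<and> (\<forall>A\<in>p. \<forall>B\<in>p. A \<inter> B \<in> p)
     \<and> (\<forall>A B. A \<in> p \<and> A \<subseteq> B \<and> B \<subseteq> S \<longrightarrow> B \<in> p)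
     \<and> (\<forall>A. A \<subseteq> S \<longrightarrow> A \<in> p \<or> S - A \<in> p)"

definition betaS :: "real set \<Rightarrow> real set set set" where
  "betaS S = {p. ultrafilter_on S p}"

definition lshift :: "real set \<Rightarrow> real \<Rightarrow> real set \<Rightarrow> real set" where
  "lshift S x A = {y\<in>S. x + y \<in> A}"

definition uplus :: "real set \<Rightarrow> real set set \<Rightarrow> real set set \<Rightarrow> real set set" where
  "uplus S p q = {A. A \<subseteq> S \<and> {x\<in>S. lshift S x A \<in> q} \<in> p}"

definition Oplus :: "real set \<Rightarrow> real set set set" where
  "Oplus S = {p \<in> betaS S. \<forall>\<epsilon>>0. S \<inter> {0<..<\<epsilon>} \<in> p}"

definition two_sided_ideal :: "real set \<Rightarrow> real set set set \<Rightarrow> real set set set \<Rightarrow> bool" where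
  "two_sided_ideal S T I \<longleftrightarrow> I \<noteq> {} \<and> I \<subseteq> T
     \<and> (\<forall>p\<in>T. \<forall>q\<in>I. uplus S p q \<in> I \<and> uplus S q p \<in> I)"

definition Kideal :: "real set \<Rightarrow> real set set set \<Rightarrow> real set set set" where
  "Kideal S T = \<Inter>{I. two_sided_ideal S T I}"

definition dynamical_system :: "'a topology \<Rightarrow> real set \<Rightarrow> (real \<Rightarrow> 'a \<Rightarrow> 'a) \<Rightarrow> bool" where
  "dynamical_system X S T \<longleftrightarrow> compact_space X \<and> Hausdorff_space X
     \<and> (\<forall>s\<in>S. continuous_map X X (T s))
     \<and> (\<forall>s\<in>S. \<forall>t\<in>S. \<forall>z\<in>topspace X. T s (T t z) = T (s + t) z)"

definition Tp :: "'a topology \<Rightarrow> real set \<Rightarrow> (real \<Rightarrow> 'a \<Rightarrow> 'a) \<Rightarrow> real set set \<Rightarrow> 'a \<Rightarrow> 'a" where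
  "Tp X S T p x = (THE z. z \<in> topspace X \<and>
     (\<forall>U. openin X U \<and> z \<in> U \<longrightarrow> {s\<in>S. T s x \<in> U} \<in> p))"

definition syndetic_near_zero :: "real set \<Rightarrow> real set \<Rightarrow> bool" where
  "syndetic_near_zero S B \<longleftrightarrow> (\<forall>\<epsilon>>0. \<exists>F. finite F \<and> F \<noteq> {} \<and> F \<subseteq> {0<..<\<epsilon>} \<inter> S
     \<and> (\<exists>\<delta>>0. S \<inter> {0<..<\<delta>} \<subseteq> (\<Union>t\<in>F. lshift S t B)))"

definition neighbourhood :: "'a topology \<Rightarrow> 'a set \<Rightarrow> 'a set \<Rightarrow> bool" where
  "neighbourhood X A W \<longleftrightarrow> W \<subseteq> topspace X \<and> (\<exists>U. openin X U \<and> A \<subseteq> U \<and> U \<subseteq> W)"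

definition unif_rec_near_zero :: "'a topology \<Rightarrow> real set \<Rightarrow> (real \<Rightarrow> 'a \<Rightarrow> 'a) \<Rightarrow> 'a \<Rightarrow> bool" where
  "unif_rec_near_zero X S T y \<longleftrightarrow>
     (\<forall>W. neighbourhood X {y} W \<longrightarrow> syndetic_near_zero S {s\<in>S. T s y \<in> W})"

definition proximal_near_zero :: "'a topology \<Rightarrow> real set \<Rightarrow> (real \<Rightarrow> 'a \<Rightarrow> 'a) \<Rightarrow> 'a \<Rightarrow> 'a \<Rightarrow> bool" where
  "proximal_near_zero X S T x y \<longleftrightarrow>
     (\<forall>U \<epsilon>. neighbourhood (prod_topology X X) {(z, z) | z. z \<in> topspace X} U \<and> \<epsilon> > 0
        \<longrightarrow> (\<exists>s\<in>S \<inter> {0<..<\<epsilon>}. (T s x, T s y) \<in> U))"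

end

theory Submission
  imports Defs
begin

text \<open>
  Everything happens in the compact right topological semigroup \<open>O\<^sup>+(S)\<close> of ultrafilters
  on \<open>S\<close> converging to \<open>0\<close> from the right, acting on \<open>X\<close> by \<open>p \<mapsto> T\<^sub>p\<close> with
  \<open>T\<^sub>p\<^sub>+\<^sub>q = T\<^sub>p \<circ> T\<^sub>q\<close>. Its smallest ideal is the union of the minimal left ideals,
  each of which is a closed orbit \<open>O\<^sup>+(S) + q\<close>. Two points are proximal near zero iff
  \<open>T\<^sub>p x = T\<^sub>p y\<close> for some \<open>p \<in> O\<^sup>+(S)\<close>. A set syndetic near zero belongs to some member
  of every left ideal; by compactness, \<open>y\<close> is uniformly recurrent near zero iff a minimal
  left ideal \<open>L\<close> contains some \<open>q\<close> with \<open>T\<^sub>q y = y\<close>, and then, by Ellis' theorem applied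
  to the closed subsemigroup of all such \<open>q\<close>, an idempotent one.

  Given \<open>p\<close> with \<open>T\<^sub>p x = T\<^sub>p y\<close>, take a minimal left ideal \<open>L \<subseteq> O\<^sup>+(S) + p\<close> and an
  idempotent \<open>u \<in> L\<close> fixing \<open>y\<close>: then \<open>T\<^sub>u x = T\<^sub>u y = y\<close>. Conversely, if \<open>u\<close> is an
  idempotent of the smallest ideal with \<open>T\<^sub>u x = y\<close>, then \<open>T\<^sub>u y = T\<^sub>u\<^sub>+\<^sub>u x = y\<close>.
\<close>

section \<open>Ultrafilters and filter bases\<close>

lemma ultrafilter_on_subset: "ultrafilter_on S p \<Longrightarrow> A \<in> p \<Longrightarrow> A \<subseteq> S"
  and ultrafilter_on_carrier: "ultrafilter_on S p \<Longrightarrow> S \<in> p"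
  and ultrafilter_on_empty: "ultrafilter_on S p \<Longrightarrow> {} \<notin> p"
  and ultrafilter_on_Int: "ultrafilter_on S p \<Longrightarrow> A \<in> p \<Longrightarrow> B \<in> p \<Longrightarrow> A \<inter> B \<in> p"
  and ultrafilter_on_compl: "ultrafilter_on S p \<Longrightarrow> A \<subseteq> S \<Longrightarrow> A \<in> p \<or> S - A \<in> p"
  unfolding ultrafilter_on_def by (elim conjE; blast)+

lemma ultrafilter_on_mono: "ultrafilter_on S p \<Longrightarrow> A \<in> p \<Longrightarrow> A \<subseteq> B \<Longrightarrow> B \<subseteq> S \<Longrightarrow> B \<in> p"
  unfolding ultrafilter_on_def by (elim conjE) (drule spec, drule spec, erule mp, blast)

lemma ultrafilter_on_Int_nonempty: "ultrafilter_on S p \<Longrightarrow> A \<in> p \<Longrightarrow> B \<in> p \<Longrightarrow> A \<inter> B \<noteq> {}"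
  by (metis ultrafilter_on_Int ultrafilter_on_empty)

lemma ultrafilter_on_compl_iff: "ultrafilter_on S p \<Longrightarrow> A \<subseteq> S \<Longrightarrow> S - A \<in> p \<longleftrightarrow> A \<notin> p"
  using ultrafilter_on_compl[of S p A] ultrafilter_on_Int_nonempty[of S p A "S - A"] by blast

lemma ultrafilter_on_Un:
  assumes p: "ultrafilter_on S p" and "A \<union> B \<in> p" "A \<subseteq> S" "B \<subseteq> S"
  shows "A \<in> p \<or> B \<in> p"
proof (rule ccontr)
  assume "\<not> (A \<in> p \<or> B \<in> p)"
  then have "(S - A) \<inter> (S - B) \<in> p"
    using ultrafilter_on_compl_iff[OF p assms(3)] ultrafilter_on_compl_iff[OF p assms(4)]
      ultrafilter_on_Int[OF p, of "S - A" "S - B"] by blast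
  moreover have "(S - A) \<inter> (S - B) \<inter> (A \<union> B) = {}"
    by blast
  ultimately show False
    using ultrafilter_on_Int_nonempty[OF p] assms(2) by blast
qed

lemma ultrafilter_on_UN:
  assumes p: "ultrafilter_on S p" and "finite F" and "\<And>t. t \<in> F \<Longrightarrow> f t \<subseteq> S"
    and "(\<Union>t\<in>F. f t) \<in> p"
  shows "\<exists>t\<in>F. f t \<in> p"
  using assms(2-)
proof (induction F rule: finite_induct)
  case empty
  then show ?case using ultrafilter_on_empty[OF p] by simp
next
  case (insert a F)
  then have "f a \<in> p \<or> (\<Union>t\<in>F. f t) \<in> p"
    using ultrafilter_on_Un[OF p, of "f a" "\<Union>t\<in>F. f t"] by auto
  then show ?case
    using insert by auto
qed

lemma ultrafilter_on_eqI:
  assumes p: "ultrafilter_on S p" and q: "ultrafilter_on S q" and "p \<subseteq> q"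
  shows "p = q"
proof (intro subset_antisym subsetI)
  fix A assume "A \<in> q"
  then show "A \<in> p"
    using ultrafilter_on_compl_iff[OF p] ultrafilter_on_compl_iff[OF q] ultrafilter_on_subset[OF q]
      \<open>p \<subseteq> q\<close> by blast
qed (use \<open>p \<subseteq> q\<close> in blast)

definition filter_base_on :: "real set \<Rightarrow> real set set \<Rightarrow> bool" where
  "filter_base_on S \<F> \<longleftrightarrow> \<F> \<subseteq> Pow S \<and> {} \<notin> \<F> \<and> (\<forall>A\<in>\<F>. \<forall>B\<in>\<F>. \<exists>C\<in>\<F>. C \<subseteq> A \<inter> B)"

lemma filter_base_on_Union_chain:
  assumes bases: "\<And>G. G \<in> \<C> \<Longrightarrow> filter_base_on S G"
    and comparable: "\<And>G\<^sub>1 G\<^sub>2. G\<^sub>1 \<in> \<C> \<Longrightarrow> G\<^sub>2 \<in> \<C> \<Longrightarrow> G\<^sub>1 \<subseteq> G\<^sub>2 \<or> G\<^sub>2 \<subseteq> G\<^sub>1"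
  shows "filter_base_on S (\<Union>\<C>)"
  unfolding filter_base_on_def
proof (intro conjI ballI)
  show "\<Union>\<C> \<subseteq> Pow S" "{} \<notin> \<Union>\<C>"
    using bases unfolding filter_base_on_def by blast+
  fix A B assume "A \<in> \<Union>\<C>" "B \<in> \<Union>\<C>"
  then obtain G where "G \<in> \<C>" "A \<in> G" "B \<in> G"
    using comparable by blast
  then obtain C where "C \<in> G" "C \<subseteq> A \<inter> B"
    using bases unfolding filter_base_on_def by blast
  with \<open>G \<in> \<C>\<close> show "\<exists>C\<in>\<Union>\<C>. C \<subseteq> A \<inter> B"
    by blast
qed

lemma maximal_filter_base_mem:
  assumes "S \<in> M" and M: "filter_base_on S M"
    and max: "\<And>G. filter_base_on S G \<Longrightarrow> M \<subseteq> G \<Longrightarrow> G = M"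
    and "A \<subseteq> S" and meets: "\<forall>C\<in>M. C \<inter> A \<noteq> {}"
  shows "A \<in> M"
proof -
  define M' where "M' = {B. B \<subseteq> S \<and> (\<exists>C\<in>M. C \<inter> A \<subseteq> B)}"
  have "M \<subseteq> M'"
    using M unfolding M'_def filter_base_on_def by blast
  moreover have "filter_base_on S M'"
    unfolding filter_base_on_def
  proof (intro conjI ballI)
    show "M' \<subseteq> Pow S" "{} \<notin> M'"
      using meets unfolding M'_def by blast+
    show "\<exists>C\<in>M'. C \<subseteq> B\<^sub>1 \<inter> B\<^sub>2" if B: "B\<^sub>1 \<in> M'" "B\<^sub>2 \<in> M'" for B\<^sub>1 B\<^sub>2
    proof -
      obtain C\<^sub>1 C\<^sub>2 where "C\<^sub>1 \<in> M" "C\<^sub>2 \<in> M" "C\<^sub>1 \<inter> A \<subseteq> B\<^sub>1" "C\<^sub>2 \<inter> A \<subseteq> B\<^sub>2"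
        using B unfolding M'_def by blast
      moreover obtain C where "C \<in> M" "C \<subseteq> C\<^sub>1 \<inter> C\<^sub>2"
        using M calculation(1,2) unfolding filter_base_on_def by blast
      ultimately have "B\<^sub>1 \<inter> B\<^sub>2 \<in> M'"
        using B unfolding M'_def by blast
      then show ?thesis by blast
    qed
  qed
  ultimately have "M' = M"
    using max by blast
  then show ?thesis
    using \<open>A \<subseteq> S\<close> \<open>S \<in> M\<close> unfolding M'_def by blast
qed

lemma ultrafilter_on_if_maximal:
  assumes "S \<in> M" and M: "filter_base_on S M"
    and max: "\<And>G. filter_base_on S G \<Longrightarrow> M \<subseteq> G \<Longrightarrow> G = M"
  shows "ultrafilter_on S M"
proof -
  have M_sub: "M \<subseteq> Pow S" and "{} \<notin> M"
    and M_directed: "\<And>A B. A \<in> M \<Longrightarrow> B \<in> M \<Longrightarrow> \<exists>C\<in>M. C \<subseteq> A \<inter> B"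
    using M unfolding filter_base_on_def by blast+
  have refine: "A \<in> M" if "A \<subseteq> S" "\<forall>C\<in>M. C \<inter> A \<noteq> {}" for A
  proof (rule maximal_filter_base_mem[OF \<open>S \<in> M\<close> M _ that])
    show "G = M" if "filter_base_on S G" "M \<subseteq> G" for G
      by (rule max[OF that])
  qed
  have up: "B \<in> M" if "A \<in> M" "A \<subseteq> B" "B \<subseteq> S" for A B
  proof (rule refine)
    show "\<forall>C\<in>M. C \<inter> B \<noteq> {}"
    proof
      fix C assume "C \<in> M"
      then obtain D where "D \<in> M" "D \<subseteq> C \<inter> A"
        using M_directed \<open>A \<in> M\<close> by blast
      moreover from this have "D \<noteq> {}"
        using \<open>{} \<notin> M\<close> by auto
      ultimately show "C \<inter> B \<noteq> {}"
        using \<open>A \<subseteq> B\<close> by blast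
    qed
  qed (fact \<open>B \<subseteq> S\<close>)
  show "ultrafilter_on S M"
    unfolding ultrafilter_on_def
  proof (intro conjI allI impI ballI)
    fix A assume "A \<subseteq> S"
    show "A \<in> M \<or> S - A \<in> M"
    proof (cases "\<forall>C\<in>M. C \<inter> A \<noteq> {}")
      case True
      then show ?thesis
        using \<open>A \<subseteq> S\<close> refine by blast
    next
      case False
      then obtain C where "C \<in> M" "C \<subseteq> S - A"
        using M_sub by blast
      then show ?thesis
        using up by blast
    qed
  next
    show "A \<inter> B \<in> M" if "A \<in> M" "B \<in> M" for A B
      using M_directed[OF that] up that M_sub by blast
  next
    show "B \<in> M" if "A \<in> M \<and> A \<subseteq> B \<and> B \<subseteq> S" for A B
      using that up by blast
  qed (use M_sub \<open>S \<in> M\<close> \<open>{} \<notin> M\<close> in auto)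
qed

lemma filter_base_on_insert_carrier:
  assumes "S \<noteq> {}" and \<F>: "filter_base_on S \<F>"
  shows "filter_base_on S (insert S \<F>)"
  unfolding filter_base_on_def
proof (intro conjI ballI)
  show "insert S \<F> \<subseteq> Pow S" "{} \<notin> insert S \<F>"
    using \<F> \<open>S \<noteq> {}\<close> unfolding filter_base_on_def by blast+
  fix A B assume AB: "A \<in> insert S \<F>" "B \<in> insert S \<F>"
  then have "A \<subseteq> S" "B \<subseteq> S"
    using \<F> unfolding filter_base_on_def by auto
  consider "A = S" | "B = S" | "A \<in> \<F>" "B \<in> \<F>"
    using AB by blast
  then show "\<exists>C\<in>insert S \<F>. C \<subseteq> A \<inter> B"
  proof cases
    case 1
    then show ?thesis
      using AB(2) \<open>B \<subseteq> S\<close> by (intro bexI[of _ B]) auto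
  next
    case 2
    then show ?thesis
      using AB(1) \<open>A \<subseteq> S\<close> by (intro bexI[of _ A]) auto
  next
    case 3
    then obtain C where "C \<in> \<F>" "C \<subseteq> A \<inter> B"
      using \<F> unfolding filter_base_on_def by blast
    then show ?thesis by blast
  qed
qed

lemma ultrafilter_exists:
  assumes "S \<noteq> {}" and \<F>: "filter_base_on S \<F>"
  shows "\<exists>p. ultrafilter_on S p \<and> \<F> \<subseteq> p"
proof -
  define \<A> where "\<A> = {G. \<F> \<subseteq> G \<and> S \<in> G \<and> filter_base_on S G}"
  have "insert S \<F> \<in> \<A>"
    using filter_base_on_insert_carrier[OF assms] unfolding \<A>_def by blast
  moreover have "\<Union>\<C> \<in> \<A>" if "\<C> \<noteq> {}" and chain: "subset.chain \<A> \<C>" for \<C>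
  proof -
    have "\<C> \<subseteq> \<A>" and comparable: "\<And>G\<^sub>1 G\<^sub>2. G\<^sub>1 \<in> \<C> \<Longrightarrow> G\<^sub>2 \<in> \<C> \<Longrightarrow> G\<^sub>1 \<subseteq> G\<^sub>2 \<or> G\<^sub>2 \<subseteq> G\<^sub>1"
      using chain unfolding subset_chain_def by blast+
    then have "filter_base_on S (\<Union>\<C>)"
      using filter_base_on_Union_chain[of \<C> S] unfolding \<A>_def by blast
    then show ?thesis
      using \<open>\<C> \<subseteq> \<A>\<close> \<open>\<C> \<noteq> {}\<close> unfolding \<A>_def by blast
  qed
  ultimately obtain M where "M \<in> \<A>" and max: "\<And>G. G \<in> \<A> \<Longrightarrow> M \<subseteq> G \<Longrightarrow> G = M"
    using subset_Zorn_nonempty[of \<A>] by blast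
  then have "\<F> \<subseteq> M" "S \<in> M" "filter_base_on S M"
    unfolding \<A>_def by blast+
  moreover have "G = M" if "filter_base_on S G" "M \<subseteq> G" for G
    using max[of G] that \<open>\<F> \<subseteq> M\<close> \<open>S \<in> M\<close> unfolding \<A>_def by blast
  ultimately show ?thesis
    using ultrafilter_on_if_maximal by blast
qed

section \<open>The semigroup \<open>\<beta>S\<close> and its closed subsets\<close>

lemma lshift_subset: "lshift S x A \<subseteq> S"
  by (auto simp: lshift_def)

lemma lshift_Int: "lshift S x (A \<inter> B) = lshift S x A \<inter> lshift S x B"
  by (auto simp: lshift_def)

lemma lshift_mono: "A \<subseteq> B \<Longrightarrow> lshift S x A \<subseteq> lshift S x B"
  by (auto simp: lshift_def)

lemma mem_uplus_iff: "A \<in> uplus S p q \<longleftrightarrow> A \<subseteq> S \<and> {x\<in>S. lshift S x A \<in> q} \<in> p"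
  by (simp add: uplus_def)

locale real_subsemigroup =
  fixes S :: "real set"
  assumes add_mem: "a \<in> S \<Longrightarrow> b \<in> S \<Longrightarrow> a + b \<in> S"
begin

abbreviation beta_plus :: "real set set \<Rightarrow> real set set \<Rightarrow> real set set" (infixl \<open>\<oplus>\<close> 65)
  where "p \<oplus> q \<equiv> uplus S p q"

lemma lshift_carrier: "x \<in> S \<Longrightarrow> lshift S x S = S"
  using add_mem by (auto simp: lshift_def)

lemma lshift_Diff_carrier: "x \<in> S \<Longrightarrow> lshift S x (S - A) = S - lshift S x A"
  using add_mem by (auto simp: lshift_def)

lemma lshift_lshift: "x \<in> S \<Longrightarrow> y \<in> S \<Longrightarrow> lshift S x (lshift S y A) = lshift S (y + x) A"
  using add_mem by (auto simp: lshift_def add.assoc)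

lemma ultrafilter_on_uplus:
  assumes p: "ultrafilter_on S p" and q: "ultrafilter_on S q"
  shows "ultrafilter_on S (p \<oplus> q)"
proof -
  define \<phi> where "\<phi> A = {x\<in>S. lshift S x A \<in> q}" for A
  have mem: "A \<in> p \<oplus> q \<longleftrightarrow> A \<subseteq> S \<and> \<phi> A \<in> p" for A
    by (simp add: mem_uplus_iff \<phi>_def)
  have \<phi>_subset: "\<phi> A \<subseteq> S" for A
    by (auto simp: \<phi>_def)
  have \<phi>_carrier: "\<phi> S = S"
    using ultrafilter_on_carrier[OF q] lshift_carrier by (auto simp: \<phi>_def)
  have \<phi>_empty: "\<phi> {} = {}"
    using ultrafilter_on_empty[OF q] by (auto simp: \<phi>_def lshift_def)
  have \<phi>_Int: "\<phi> (A \<inter> B) = \<phi> A \<inter> \<phi> B" for A B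
    using ultrafilter_on_Int[OF q] ultrafilter_on_mono[OF q _ _ lshift_subset]
    unfolding \<phi>_def lshift_Int by blast
  have \<phi>_mono: "\<phi> A \<subseteq> \<phi> B" if "A \<subseteq> B" for A B
    using ultrafilter_on_mono[OF q _ lshift_mono[OF that] lshift_subset] unfolding \<phi>_def by blast
  have \<phi>_Diff: "\<phi> (S - A) = S - \<phi> A" for A
    using lshift_Diff_carrier ultrafilter_on_compl_iff[OF q lshift_subset] by (auto simp: \<phi>_def)
  show ?thesis
    unfolding ultrafilter_on_def
  proof (intro conjI allI ballI impI)
    show "A \<inter> B \<in> p \<oplus> q" if "A \<in> p \<oplus> q" "B \<in> p \<oplus> q" for A B
      using that mem \<phi>_Int ultrafilter_on_Int[OF p] by auto
    show "B \<in> p \<oplus> q" if "A \<in> p \<oplus> q \<and> A \<subseteq> B \<and> B \<subseteq> S" for A B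
      using that mem ultrafilter_on_mono[OF p _ \<phi>_mono \<phi>_subset] by blast
    show "A \<in> p \<oplus> q \<or> S - A \<in> p \<oplus> q" if "A \<subseteq> S" for A
      using that mem \<phi>_Diff ultrafilter_on_compl[OF p \<phi>_subset[of A]] by auto
  qed (use mem \<phi>_carrier \<phi>_empty ultrafilter_on_carrier[OF p] ultrafilter_on_empty[OF p] in auto)
qed

lemma uplus_assoc:
  assumes "ultrafilter_on S p" "ultrafilter_on S q" "ultrafilter_on S r"
  shows "(p \<oplus> q) \<oplus> r = p \<oplus> (q \<oplus> r)"
proof (rule set_eqI)
  fix A
  have "lshift S y {x\<in>S. lshift S x A \<in> r} = {x\<in>S. lshift S x (lshift S y A) \<in> r}" if "y \<in> S" for y
  proof -
    have "lshift S y {x\<in>S. lshift S x A \<in> r} = {x\<in>S. lshift S (y + x) A \<in> r}"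
      using that add_mem by (auto simp: lshift_def)
    also have "\<dots> = {x\<in>S. lshift S x (lshift S y A) \<in> r}"
      using that by (auto simp: lshift_lshift)
    finally show ?thesis .
  qed
  then have "{y\<in>S. lshift S y {x\<in>S. lshift S x A \<in> r} \<in> q} = {y\<in>S. {x\<in>S. lshift S x (lshift S y A) \<in> r} \<in> q}"
    by auto
  then show "A \<in> (p \<oplus> q) \<oplus> r \<longleftrightarrow> A \<in> p \<oplus> (q \<oplus> r)"
    by (simp add: mem_uplus_iff lshift_subset)
qed

end

text \<open>Closed sets of the Stone topology: \<open>p\<close> lies in the closure of \<open>C\<close> iff every member
  of \<open>p\<close> is a member of some \<open>q \<in> C\<close>.\<close>

definition beta_closed :: "real set \<Rightarrow> real set set set \<Rightarrow> bool" where
  "beta_closed S C \<longleftrightarrow> C \<subseteq> betaS S \<and> (\<forall>p\<in>betaS S. (\<forall>A\<in>p. \<exists>q\<in>C. A \<in> q) \<longrightarrow> p \<in> C)"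

lemma beta_closed_subset: "beta_closed S C \<Longrightarrow> q \<in> C \<Longrightarrow> ultrafilter_on S q"
  by (auto simp: beta_closed_def betaS_def)

lemma beta_closedD:
  "beta_closed S C \<Longrightarrow> ultrafilter_on S p \<Longrightarrow> (\<And>A. A \<in> p \<Longrightarrow> \<exists>q\<in>C. A \<in> q) \<Longrightarrow> p \<in> C"
  by (auto simp: beta_closed_def betaS_def)

lemma beta_closedI:
  assumes "\<And>q. q \<in> C \<Longrightarrow> ultrafilter_on S q"
    and "\<And>p. ultrafilter_on S p \<Longrightarrow> \<forall>A\<in>p. \<exists>q\<in>C. A \<in> q \<Longrightarrow> p \<in> C"
  shows "beta_closed S C"
  using assms by (auto simp: beta_closed_def betaS_def)

lemma beta_closed_betaS: "beta_closed S (betaS S)"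
  by (auto simp: beta_closed_def)

lemma beta_closed_restrict:
  assumes C: "beta_closed S C" and "\<D> \<subseteq> Pow S"
  shows "beta_closed S {q\<in>C. \<forall>D\<in>\<D>. D \<in> q}"
proof (rule beta_closedI)
  show "ultrafilter_on S q" if "q \<in> {q\<in>C. \<forall>D\<in>\<D>. D \<in> q}" for q
    using that beta_closed_subset[OF C] by blast
next
  fix p assume p: "ultrafilter_on S p" and meets: "\<forall>A\<in>p. \<exists>q\<in>{q\<in>C. \<forall>D\<in>\<D>. D \<in> q}. A \<in> q"
  have "p \<in> C"
    by (rule beta_closedD[OF C p]) (use meets in blast)
  moreover have "D \<in> p" if D: "D \<in> \<D>" for D
  proof (rule ccontr)
    have "D \<subseteq> S"
      using D assms(2) by blast
    assume "D \<notin> p"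
    then have "S - D \<in> p"
      using ultrafilter_on_compl_iff[OF p \<open>D \<subseteq> S\<close>] by blast
    then obtain q where "q \<in> C" "D \<in> q" "S - D \<in> q"
      using meets D by blast
    then show False
      using ultrafilter_on_compl_iff[OF beta_closed_subset[OF C \<open>q \<in> C\<close>] \<open>D \<subseteq> S\<close>] by blast
  qed
  ultimately show "p \<in> {q\<in>C. \<forall>D\<in>\<D>. D \<in> q}"
    by blast
qed

lemma beta_closed_Inter:
  assumes "\<C> \<noteq> {}" and closed: "\<And>C. C \<in> \<C> \<Longrightarrow> beta_closed S C"
  shows "beta_closed S (\<Inter>\<C>)"
proof (rule beta_closedI)
  fix q assume "q \<in> \<Inter>\<C>"
  moreover obtain C where "C \<in> \<C>"
    using assms(1) by blast
  ultimately show "ultrafilter_on S q"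
    using beta_closed_subset[OF closed[OF \<open>C \<in> \<C>\<close>]] by blast
next
  fix p assume p: "ultrafilter_on S p" and meets: "\<forall>A\<in>p. \<exists>q\<in>\<Inter>\<C>. A \<in> q"
  show "p \<in> \<Inter>\<C>"
  proof
    fix C assume "C \<in> \<C>"
    show "p \<in> C"
      by (rule beta_closedD[OF closed[OF \<open>C \<in> \<C>\<close>] p]) (use meets \<open>C \<in> \<C>\<close> in blast)
  qed
qed

lemma filter_base_on_common_members:
  assumes uf: "\<And>C q. C \<in> \<C> \<Longrightarrow> q \<in> C \<Longrightarrow> ultrafilter_on S q"
    and nonempty: "\<And>C. C \<in> \<C> \<Longrightarrow> C \<noteq> {}"
    and directed: "\<And>C\<^sub>1 C\<^sub>2. C\<^sub>1 \<in> \<C> \<Longrightarrow> C\<^sub>2 \<in> \<C> \<Longrightarrow> \<exists>C\<in>\<C>. C \<subseteq> C\<^sub>1 \<inter> C\<^sub>2"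
  shows "filter_base_on S {A. A \<subseteq> S \<and> (\<exists>C\<in>\<C>. \<forall>q\<in>C. A \<in> q)}"
  unfolding filter_base_on_def
proof (intro conjI ballI)
  show "{A. A \<subseteq> S \<and> (\<exists>C\<in>\<C>. \<forall>q\<in>C. A \<in> q)} \<subseteq> Pow S"
    by blast
  show "{} \<notin> {A. A \<subseteq> S \<and> (\<exists>C\<in>\<C>. \<forall>q\<in>C. A \<in> q)}"
  proof
    assume "{} \<in> {A. A \<subseteq> S \<and> (\<exists>C\<in>\<C>. \<forall>q\<in>C. A \<in> q)}"
    then obtain C where "C \<in> \<C>" "\<forall>q\<in>C. {} \<in> q"
      by blast
    moreover obtain q where "q \<in> C"
      using nonempty \<open>C \<in> \<C>\<close> by blast
    ultimately show False
      using ultrafilter_on_empty[OF uf] by blast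
  qed
  fix A B assume AB: "A \<in> {A. A \<subseteq> S \<and> (\<exists>C\<in>\<C>. \<forall>q\<in>C. A \<in> q)}" "B \<in> {A. A \<subseteq> S \<and> (\<exists>C\<in>\<C>. \<forall>q\<in>C. A \<in> q)}"
  then obtain C\<^sub>1 C\<^sub>2 where C12: "C\<^sub>1 \<in> \<C>" "C\<^sub>2 \<in> \<C>" "\<forall>q\<in>C\<^sub>1. A \<in> q" "\<forall>q\<in>C\<^sub>2. B \<in> q"
    by blast
  obtain C where "C \<in> \<C>" "C \<subseteq> C\<^sub>1 \<inter> C\<^sub>2"
    using directed[OF C12(1,2)] by blast
  then have "\<forall>q\<in>C. A \<inter> B \<in> q"
    using C12(3,4) ultrafilter_on_Int[OF uf] by blast
  then have "A \<inter> B \<in> {A. A \<subseteq> S \<and> (\<exists>C\<in>\<C>. \<forall>q\<in>C. A \<in> q)}"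
    using AB \<open>C \<in> \<C>\<close> by blast
  then show "\<exists>D\<in>{A. A \<subseteq> S \<and> (\<exists>C\<in>\<C>. \<forall>q\<in>C. A \<in> q)}. D \<subseteq> A \<inter> B"
    by blast
qed

lemma beta_closed_Inter_nonempty:
  assumes "\<C> \<noteq> {}" and closed: "\<And>C. C \<in> \<C> \<Longrightarrow> beta_closed S C \<and> C \<noteq> {}"
    and directed: "\<And>C\<^sub>1 C\<^sub>2. C\<^sub>1 \<in> \<C> \<Longrightarrow> C\<^sub>2 \<in> \<C> \<Longrightarrow> \<exists>C\<in>\<C>. C \<subseteq> C\<^sub>1 \<inter> C\<^sub>2"
  shows "\<Inter>\<C> \<noteq> {}"
proof -
  have uf: "ultrafilter_on S q" if "C \<in> \<C>" "q \<in> C" for C q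
    using closed[OF that(1)] beta_closed_subset that(2) by blast
  obtain C\<^sub>0 q\<^sub>0 where "C\<^sub>0 \<in> \<C>" "q\<^sub>0 \<in> C\<^sub>0"
    using assms(1) closed by blast
  then have "S \<noteq> {}"
    using ultrafilter_on_carrier[OF uf] ultrafilter_on_empty[OF uf] by metis
  define \<F> where "\<F> = {A. A \<subseteq> S \<and> (\<exists>C\<in>\<C>. \<forall>q\<in>C. A \<in> q)}"
  have "filter_base_on S \<F>"
    unfolding \<F>_def
  proof (rule filter_base_on_common_members)
    show "ultrafilter_on S q" if "C \<in> \<C>" "q \<in> C" for C q
      using uf[OF that] .
    show "C \<noteq> {}" if "C \<in> \<C>" for C
      using closed[OF that] by blast
  qed (fact directed)
  then obtain p where p: "ultrafilter_on S p" "\<F> \<subseteq> p"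
    using ultrafilter_exists[OF \<open>S \<noteq> {}\<close>] by blast
  have "p \<in> C" if C: "C \<in> \<C>" for C
  proof (rule beta_closedD[OF _ p(1)])
    show "beta_closed S C"
      using closed C by blast
    show "\<exists>q\<in>C. A \<in> q" if A: "A \<in> p" for A
    proof (rule ccontr)
      have "A \<subseteq> S"
        using ultrafilter_on_subset[OF p(1) A] .
      assume "\<not> (\<exists>q\<in>C. A \<in> q)"
      then have "\<forall>q\<in>C. S - A \<in> q"
        using ultrafilter_on_compl[OF uf[OF C] \<open>A \<subseteq> S\<close>] by blast
      then have "S - A \<in> p"
        using C p(2) unfolding \<F>_def by blast
      then show False
        using ultrafilter_on_compl_iff[OF p(1) \<open>A \<subseteq> S\<close>] A by blast
    qed
  qed
  then show ?thesis
    by blast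
qed

lemma beta_closed_minimal_exists:
  assumes closed: "\<And>N. N \<in> \<P> \<Longrightarrow> beta_closed S N \<and> N \<noteq> {}"
    and chain: "\<And>\<C>. \<C> \<noteq> {} \<Longrightarrow> \<C> \<subseteq> \<P> \<Longrightarrow> (\<forall>C\<^sub>1\<in>\<C>. \<forall>C\<^sub>2\<in>\<C>. C\<^sub>1 \<subseteq> C\<^sub>2 \<or> C\<^sub>2 \<subseteq> C\<^sub>1)
      \<Longrightarrow> \<Inter>\<C> \<noteq> {} \<Longrightarrow> \<Inter>\<C> \<in> \<P>"
    and "A \<in> \<P>"
  shows "\<exists>M\<in>\<P>. M \<subseteq> A \<and> (\<forall>N\<in>\<P>. N \<subseteq> M \<longrightarrow> N = M)"
proof -
  define \<P>\<^sub>A where "\<P>\<^sub>A = {N\<in>\<P>. N \<subseteq> A}"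
  have po: "partial_order_on \<P>\<^sub>A (relation_of (\<lambda>M N. N \<subseteq> M) \<P>\<^sub>A)"
    by (rule partial_order_on_relation_ofI) auto
  have lower_bound: "\<exists>L\<in>\<P>\<^sub>A. \<forall>N\<in>\<C>. L \<subseteq> N"
    if \<C>: "\<C> \<in> Chains (relation_of (\<lambda>M N. N \<subseteq> M) \<P>\<^sub>A)" for \<C>
  proof (cases "\<C> = {}")
    case True
    then show ?thesis
      using \<open>A \<in> \<P>\<close> unfolding \<P>\<^sub>A_def by blast
  next
    case False
    have sub: "\<C> \<subseteq> \<P>\<^sub>A"
      using Chains_relation_of[OF \<C>] .
    have comparable: "\<forall>C\<^sub>1\<in>\<C>. \<forall>C\<^sub>2\<in>\<C>. C\<^sub>1 \<subseteq> C\<^sub>2 \<or> C\<^sub>2 \<subseteq> C\<^sub>1"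
      using \<C> by (auto simp: Chains_def relation_of_def)
    have "\<Inter>\<C> \<noteq> {}"
    proof (rule beta_closed_Inter_nonempty[OF False])
      show "beta_closed S C \<and> C \<noteq> {}" if "C \<in> \<C>" for C
        using that sub closed unfolding \<P>\<^sub>A_def by blast
      show "\<exists>C\<in>\<C>. C \<subseteq> C\<^sub>1 \<inter> C\<^sub>2" if "C\<^sub>1 \<in> \<C>" "C\<^sub>2 \<in> \<C>" for C\<^sub>1 C\<^sub>2
      proof -
        have "C\<^sub>1 \<subseteq> C\<^sub>2 \<or> C\<^sub>2 \<subseteq> C\<^sub>1"
          using comparable that by blast
        then show ?thesis
          using that by blast
      qed
    qed
    moreover have "\<C> \<subseteq> \<P>" "\<Inter>\<C> \<subseteq> A"
      using sub False unfolding \<P>\<^sub>A_def by blast+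
    ultimately have "\<Inter>\<C> \<in> \<P>\<^sub>A"
      using chain[OF False _ comparable] unfolding \<P>\<^sub>A_def by blast
    then show ?thesis
      by blast
  qed
  have "\<exists>M\<in>\<P>\<^sub>A. \<forall>N\<in>\<P>\<^sub>A. N \<subseteq> M \<longrightarrow> N = M"
    by (rule predicate_Zorn[OF po lower_bound])
  then obtain M where M: "M \<in> \<P>" "M \<subseteq> A" and min: "\<And>N. N \<in> \<P>\<^sub>A \<Longrightarrow> N \<subseteq> M \<Longrightarrow> N = M"
    unfolding \<P>\<^sub>A_def by blast
  have "N = M" if "N \<in> \<P>" "N \<subseteq> M" for N
    using that M(2) by (intro min) (auto simp: \<P>\<^sub>A_def)
  with M show ?thesis
    by blast
qed

definition closed_subsemigroup :: "real set \<Rightarrow> real set set set \<Rightarrow> bool" where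
  "closed_subsemigroup S E \<longleftrightarrow> beta_closed S E \<and> E \<noteq> {} \<and> (\<forall>p\<in>E. \<forall>q\<in>E. uplus S p q \<in> E)"

lemma closed_subsemigroup_minimal_exists:
  assumes "closed_subsemigroup S E"
  shows "\<exists>M. closed_subsemigroup S M \<and> M \<subseteq> E \<and> (\<forall>N. closed_subsemigroup S N \<longrightarrow> N \<subseteq> M \<longrightarrow> N = M)"
proof -
  have "\<Inter>\<C> \<in> Collect (closed_subsemigroup S)"
    if "\<C> \<noteq> {}" "\<C> \<subseteq> Collect (closed_subsemigroup S)" "\<Inter>\<C> \<noteq> {}" for \<C>
  proof -
    have "beta_closed S (\<Inter>\<C>)"
      using that(2) by (intro beta_closed_Inter[OF that(1)]) (auto simp: closed_subsemigroup_def)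
    moreover have "uplus S p q \<in> \<Inter>\<C>" if "p \<in> \<Inter>\<C>" "q \<in> \<Inter>\<C>" for p q
      using that \<open>\<C> \<subseteq> Collect (closed_subsemigroup S)\<close> unfolding closed_subsemigroup_def by blast
    ultimately show ?thesis
      using that(3) unfolding closed_subsemigroup_def by blast
  qed
  then have "\<exists>M\<in>Collect (closed_subsemigroup S). M \<subseteq> E \<and> (\<forall>N\<in>Collect (closed_subsemigroup S). N \<subseteq> M \<longrightarrow> N = M)"
    using assms by (intro beta_closed_minimal_exists) (auto simp: closed_subsemigroup_def)
  then show ?thesis
    by blast
qed

context real_subsemigroup
begin

lemma beta_closed_image_uplus_right:
  assumes M: "beta_closed S M" and p: "ultrafilter_on S p"
  shows "beta_closed S ((\<lambda>q. q \<oplus> p) ` M)"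
proof (rule beta_closedI)
  show "ultrafilter_on S r" if "r \<in> (\<lambda>q. q \<oplus> p) ` M" for r
    using that ultrafilter_on_uplus[OF beta_closed_subset[OF M] p] by blast
next
  fix r assume r: "ultrafilter_on S r" and meets: "\<forall>A\<in>r. \<exists>r'\<in>(\<lambda>q. q \<oplus> p) ` M. A \<in> r'"
  have uf: "ultrafilter_on S (q \<oplus> p)" if "q \<in> M" for q
    using ultrafilter_on_uplus[OF beta_closed_subset[OF M that] p] .
  define CC where "CC A = {q\<in>M. A \<in> q \<oplus> p}" for A
  have "\<Inter>(CC ` r) \<noteq> {}"
  proof (rule beta_closed_Inter_nonempty)
    show "CC ` r \<noteq> {}"
      using ultrafilter_on_carrier[OF r] by blast
  next
    fix C assume "C \<in> CC ` r"
    then obtain A where A: "A \<in> r" "C = CC A"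
      by blast
    then have "C = {q\<in>M. \<forall>D\<in>{{x\<in>S. lshift S x A \<in> p}}. D \<in> q}"
      using ultrafilter_on_subset[OF r A(1)] by (auto simp: CC_def mem_uplus_iff)
    then have "beta_closed S C"
      using beta_closed_restrict[OF M, of "{{x\<in>S. lshift S x A \<in> p}}"] by auto
    moreover have "C \<noteq> {}"
      using meets A by (auto simp: CC_def)
    ultimately show "beta_closed S C \<and> C \<noteq> {}"
      by blast
  next
    fix C\<^sub>1 C\<^sub>2 assume "C\<^sub>1 \<in> CC ` r" "C\<^sub>2 \<in> CC ` r"
    then obtain A B where AB: "A \<in> r" "B \<in> r" "C\<^sub>1 = CC A" "C\<^sub>2 = CC B"
      by blast
    have CC_mono: "CC A' \<subseteq> CC A" if "A' \<subseteq> A" "A \<subseteq> S" for A A'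
      using ultrafilter_on_mono[OF uf _ that] unfolding CC_def by blast
    have "CC (A \<inter> B) \<subseteq> CC A \<inter> CC B"
      using CC_mono[of "A \<inter> B" A] CC_mono[of "A \<inter> B" B] ultrafilter_on_subset[OF r] AB(1,2) by blast
    moreover have "A \<inter> B \<in> r"
      using ultrafilter_on_Int[OF r AB(1,2)] .
    ultimately show "\<exists>C\<in>CC ` r. C \<subseteq> C\<^sub>1 \<inter> C\<^sub>2"
      using AB(3,4) by blast
  qed
  then obtain q where q: "\<And>A. A \<in> r \<Longrightarrow> q \<in> CC A"
    by blast
  then have "q \<in> M"
    using ultrafilter_on_carrier[OF r] unfolding CC_def by blast
  moreover have "r \<subseteq> q \<oplus> p"
    using q unfolding CC_def by blast
  ultimately show "r \<in> (\<lambda>q. q \<oplus> p) ` M"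
    using ultrafilter_on_eqI[OF r uf] by blast
qed

lemma beta_closed_right_stabilizer:
  assumes M: "beta_closed S M" and p: "ultrafilter_on S p"
  shows "beta_closed S {q\<in>M. q \<oplus> p = p}"
proof -
  have "q \<oplus> p = p \<longleftrightarrow> (\<forall>A\<in>p. {x\<in>S. lshift S x A \<in> p} \<in> q)" if "q \<in> M" for q
  proof
    show "\<forall>A\<in>p. {x\<in>S. lshift S x A \<in> p} \<in> q" if "q \<oplus> p = p"
      using that by (metis mem_uplus_iff)
  next
    assume "\<forall>A\<in>p. {x\<in>S. lshift S x A \<in> p} \<in> q"
    then have "p \<subseteq> q \<oplus> p"
      using ultrafilter_on_subset[OF p] by (auto simp: mem_uplus_iff)
    then show "q \<oplus> p = p"
      using ultrafilter_on_eqI[OF p ultrafilter_on_uplus[OF beta_closed_subset[OF M that] p]] by simp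
  qed
  then have "{q\<in>M. q \<oplus> p = p} = {q\<in>M. \<forall>D\<in>{{x\<in>S. lshift S x A \<in> p} | A. A \<in> p}. D \<in> q}"
    by blast
  moreover have "beta_closed S {q\<in>M. \<forall>D\<in>{{x\<in>S. lshift S x A \<in> p} | A. A \<in> p}. D \<in> q}"
    by (rule beta_closed_restrict[OF M]) blast
  ultimately show ?thesis
    by simp
qed

lemma closed_subsemigroup_image_uplus_right:
  assumes M: "closed_subsemigroup S M" and "p \<in> M"
  shows "closed_subsemigroup S ((\<lambda>q. q \<oplus> p) ` M)"
proof -
  have M_closed: "beta_closed S M" and M_plus: "\<And>q r. q \<in> M \<Longrightarrow> r \<in> M \<Longrightarrow> q \<oplus> r \<in> M"
    using M unfolding closed_subsemigroup_def by blast+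
  have uf: "\<And>q. q \<in> M \<Longrightarrow> ultrafilter_on S q"
    using beta_closed_subset[OF M_closed] .
  show ?thesis
    unfolding closed_subsemigroup_def
  proof (intro conjI ballI)
    show "beta_closed S ((\<lambda>q. q \<oplus> p) ` M)"
      using beta_closed_image_uplus_right[OF M_closed uf[OF \<open>p \<in> M\<close>]] .
    show "(\<lambda>q. q \<oplus> p) ` M \<noteq> {}"
      using \<open>p \<in> M\<close> by blast
  next
    fix a b assume "a \<in> (\<lambda>q. q \<oplus> p) ` M" "b \<in> (\<lambda>q. q \<oplus> p) ` M"
    then obtain q\<^sub>1 q\<^sub>2 where q: "q\<^sub>1 \<in> M" "q\<^sub>2 \<in> M" "a = q\<^sub>1 \<oplus> p" "b = q\<^sub>2 \<oplus> p"
      by blast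
    then have "a \<oplus> b = ((q\<^sub>1 \<oplus> p) \<oplus> q\<^sub>2) \<oplus> p"
      using uplus_assoc uf M_plus \<open>p \<in> M\<close> by metis
    moreover have "(q\<^sub>1 \<oplus> p) \<oplus> q\<^sub>2 \<in> M"
      using M_plus q(1,2) \<open>p \<in> M\<close> by blast
    ultimately show "a \<oplus> b \<in> (\<lambda>q. q \<oplus> p) ` M"
      by blast
  qed
qed

lemma closed_subsemigroup_right_stabilizer:
  assumes M: "closed_subsemigroup S M" and "p \<in> M" and "\<exists>q\<in>M. q \<oplus> p = p"
  shows "closed_subsemigroup S {q\<in>M. q \<oplus> p = p}"
proof -
  have M_closed: "beta_closed S M" and M_plus: "\<And>q r. q \<in> M \<Longrightarrow> r \<in> M \<Longrightarrow> q \<oplus> r \<in> M"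
    using M unfolding closed_subsemigroup_def by blast+
  have uf: "\<And>q. q \<in> M \<Longrightarrow> ultrafilter_on S q"
    using beta_closed_subset[OF M_closed] .
  show ?thesis
    unfolding closed_subsemigroup_def
  proof (intro conjI ballI)
    show "beta_closed S {q\<in>M. q \<oplus> p = p}"
      using beta_closed_right_stabilizer[OF M_closed uf[OF \<open>p \<in> M\<close>]] .
    show "{q\<in>M. q \<oplus> p = p} \<noteq> {}"
      using assms(3) by blast
  next
    fix a b assume "a \<in> {q\<in>M. q \<oplus> p = p}" "b \<in> {q\<in>M. q \<oplus> p = p}"
    then have ab: "a \<in> M" "b \<in> M" "a \<oplus> p = p" "b \<oplus> p = p"
      by auto
    then have "(a \<oplus> b) \<oplus> p = p"
      using uplus_assoc[OF uf uf uf[OF \<open>p \<in> M\<close>]] by simp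
    then show "a \<oplus> b \<in> {q\<in>M. q \<oplus> p = p}"
      using M_plus ab by blast
  qed
qed

text \<open>Ellis' argument: in a minimal closed subsemigroup \<open>M\<close>, both \<open>M + p\<close> and the
  stabiliser of \<open>p\<close> must be all of \<open>M\<close>, so \<open>p\<close> stabilises itself.\<close>

lemma minimal_closed_subsemigroup_idempotent:
  assumes M: "closed_subsemigroup S M"
    and min: "\<And>N. closed_subsemigroup S N \<Longrightarrow> N \<subseteq> M \<Longrightarrow> N = M" and "p \<in> M"
  shows "p \<oplus> p = p"
proof -
  have M_plus: "\<And>q r. q \<in> M \<Longrightarrow> r \<in> M \<Longrightarrow> q \<oplus> r \<in> M"
    using M unfolding closed_subsemigroup_def by blast
  have "(\<lambda>q. q \<oplus> p) ` M = M"
    using min[OF closed_subsemigroup_image_uplus_right[OF M \<open>p \<in> M\<close>]] M_plus \<open>p \<in> M\<close> by blast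
  then have "\<exists>q\<in>M. q \<oplus> p = p"
    using \<open>p \<in> M\<close> by (metis imageE)
  then have "{q\<in>M. q \<oplus> p = p} = M"
    using min[OF closed_subsemigroup_right_stabilizer[OF M \<open>p \<in> M\<close>]] by blast
  then show ?thesis
    using \<open>p \<in> M\<close> by blast
qed

theorem closed_subsemigroup_idempotent:
  assumes "closed_subsemigroup S E"
  shows "\<exists>u\<in>E. u \<oplus> u = u"
proof -
  obtain M where M: "closed_subsemigroup S M" "M \<subseteq> E"
    and min: "\<And>N. closed_subsemigroup S N \<Longrightarrow> N \<subseteq> M \<Longrightarrow> N = M"
    using closed_subsemigroup_minimal_exists[OF assms] by blast
  obtain p where "p \<in> M"
    using M(1) unfolding closed_subsemigroup_def by blast
  then show ?thesis
    using minimal_closed_subsemigroup_idempotent[OF M(1) min] M(2) by blast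
qed

end

section \<open>Minimal left ideals of \<open>O\<^sup>+(S)\<close>\<close>

lemma Oplus_ultrafilter: "p \<in> Oplus S \<Longrightarrow> ultrafilter_on S p"
  by (simp add: Oplus_def betaS_def)

lemma Oplus_near_zero: "p \<in> Oplus S \<Longrightarrow> \<epsilon> > 0 \<Longrightarrow> S \<inter> {0<..<\<epsilon>} \<in> p"
  by (simp add: Oplus_def)

lemma beta_closed_Oplus: "beta_closed S (Oplus S)"
proof -
  have "Oplus S = {q\<in>betaS S. \<forall>D\<in>{S \<inter> {0<..<\<epsilon>} | \<epsilon>. \<epsilon> > 0}. D \<in> q}"
    by (auto simp: Oplus_def)
  moreover have "beta_closed S {q\<in>betaS S. \<forall>D\<in>{S \<inter> {0<..<\<epsilon>} | \<epsilon>. \<epsilon> > 0}. D \<in> q}"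
    by (rule beta_closed_restrict[OF beta_closed_betaS]) auto
  ultimately show ?thesis
    by simp
qed

lemma filter_base_on_near_zero:
  assumes "\<A> \<subseteq> Pow S"
    and directed: "\<And>A B. A \<in> \<A> \<Longrightarrow> B \<in> \<A> \<Longrightarrow> \<exists>C\<in>\<A>. C \<subseteq> A \<inter> B"
    and near_zero: "\<And>A \<epsilon>. A \<in> \<A> \<Longrightarrow> \<epsilon> > 0 \<Longrightarrow> A \<inter> {0<..<\<epsilon>} \<noteq> {}"
  shows "filter_base_on S {A \<inter> {0<..<\<epsilon>} | A \<epsilon>. A \<in> \<A> \<and> \<epsilon> > 0}"
  unfolding filter_base_on_def
proof (intro conjI ballI)
  show "{A \<inter> {0<..<\<epsilon>} | A \<epsilon>. A \<in> \<A> \<and> \<epsilon> > 0} \<subseteq> Pow S"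
    using assms(1) by blast
  show "{} \<notin> {A \<inter> {0<..<\<epsilon>} | A \<epsilon>. A \<in> \<A> \<and> \<epsilon> > 0}"
    using near_zero by force
  fix F\<^sub>1 F\<^sub>2 assume "F\<^sub>1 \<in> {A \<inter> {0<..<\<epsilon>} | A \<epsilon>. A \<in> \<A> \<and> \<epsilon> > 0}"
    "F\<^sub>2 \<in> {A \<inter> {0<..<\<epsilon>} | A \<epsilon>. A \<in> \<A> \<and> \<epsilon> > 0}"
  then obtain A\<^sub>1 A\<^sub>2 \<epsilon>\<^sub>1 \<epsilon>\<^sub>2 where F: "F\<^sub>1 = A\<^sub>1 \<inter> {0<..<\<epsilon>\<^sub>1}" "F\<^sub>2 = A\<^sub>2 \<inter> {0<..<\<epsilon>\<^sub>2}"
    and A: "A\<^sub>1 \<in> \<A>" "A\<^sub>2 \<in> \<A>" and \<epsilon>: "\<epsilon>\<^sub>1 > 0" "\<epsilon>\<^sub>2 > 0"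
    by blast
  obtain C where "C \<in> \<A>" "C \<subseteq> A\<^sub>1 \<inter> A\<^sub>2"
    using directed[OF A] by blast
  have "min \<epsilon>\<^sub>1 \<epsilon>\<^sub>2 > 0"
    using \<epsilon> by simp
  then have "C \<inter> {0<..<min \<epsilon>\<^sub>1 \<epsilon>\<^sub>2} \<in> {A \<inter> {0<..<\<epsilon>} | A \<epsilon>. A \<in> \<A> \<and> \<epsilon> > 0}"
    using \<open>C \<in> \<A>\<close> by blast
  moreover have "C \<inter> {0<..<min \<epsilon>\<^sub>1 \<epsilon>\<^sub>2} \<subseteq> F\<^sub>1 \<inter> F\<^sub>2"
    using \<open>C \<subseteq> A\<^sub>1 \<inter> A\<^sub>2\<close> unfolding F by auto
  ultimately show "\<exists>C\<in>{A \<inter> {0<..<\<epsilon>} | A \<epsilon>. A \<in> \<A> \<and> \<epsilon> > 0}. C \<subseteq> F\<^sub>1 \<inter> F\<^sub>2"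
    by blast
qed

lemma ex_Oplus_superset:
  assumes "\<A> \<noteq> {}" and "\<A> \<subseteq> Pow S"
    and directed: "\<And>A B. A \<in> \<A> \<Longrightarrow> B \<in> \<A> \<Longrightarrow> \<exists>C\<in>\<A>. C \<subseteq> A \<inter> B"
    and near_zero: "\<And>A \<epsilon>. A \<in> \<A> \<Longrightarrow> \<epsilon> > 0 \<Longrightarrow> A \<inter> {0<..<\<epsilon>} \<noteq> {}"
  shows "\<exists>p\<in>Oplus S. \<A> \<subseteq> p"
proof -
  obtain A\<^sub>0 where "A\<^sub>0 \<in> \<A>"
    using assms(1) by blast
  then have "A\<^sub>0 \<subseteq> S" "S \<noteq> {}"
    using near_zero[OF \<open>A\<^sub>0 \<in> \<A>\<close> zero_less_one] assms(2) by blast+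
  then obtain p where p: "ultrafilter_on S p" "{A \<inter> {0<..<\<epsilon>} | A \<epsilon>. A \<in> \<A> \<and> \<epsilon> > 0} \<subseteq> p"
    using ultrafilter_exists filter_base_on_near_zero[OF assms(2) directed near_zero] by blast
  then have in_p: "A \<inter> {0<..<\<epsilon>} \<in> p" if "A \<in> \<A>" "\<epsilon> > 0" for A \<epsilon>
    using that by blast
  have "A \<in> p" if "A \<in> \<A>" for A
    using ultrafilter_on_mono[OF p(1) in_p[OF that zero_less_one]] that assms(2) by blast
  moreover have "S \<inter> {0<..<\<epsilon>} \<in> p" if "\<epsilon> > 0" for \<epsilon>
    using \<open>A\<^sub>0 \<subseteq> S\<close> by (intro ultrafilter_on_mono[OF p(1) in_p[OF \<open>A\<^sub>0 \<in> \<A>\<close> that]]) auto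
  ultimately show ?thesis
    using p(1) unfolding Oplus_def betaS_def by blast
qed

definition left_ideal :: "real set \<Rightarrow> real set set set \<Rightarrow> bool" where
  "left_ideal S L \<longleftrightarrow> L \<noteq> {} \<and> L \<subseteq> Oplus S \<and> (\<forall>p\<in>Oplus S. \<forall>q\<in>L. uplus S p q \<in> L)"

definition minimal_left_ideal :: "real set \<Rightarrow> real set set set \<Rightarrow> bool" where
  "minimal_left_ideal S L \<longleftrightarrow> left_ideal S L \<and> (\<forall>J. left_ideal S J \<longrightarrow> J \<subseteq> L \<longrightarrow> J = L)"

lemma minimal_left_ideal_left_ideal: "minimal_left_ideal S L \<Longrightarrow> left_ideal S L"
  by (simp add: minimal_left_ideal_def)

lemma left_idealD:
  assumes "left_ideal S L"
  shows "L \<noteq> {}" "L \<subseteq> Oplus S" "\<And>p q. p \<in> Oplus S \<Longrightarrow> q \<in> L \<Longrightarrow> uplus S p q \<in> L"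
  using assms unfolding left_ideal_def by blast+

context real_subsemigroup
begin

lemma uplus_Oplus:
  assumes p: "p \<in> Oplus S" and q: "q \<in> Oplus S"
  shows "p \<oplus> q \<in> Oplus S"
proof -
  have "S \<inter> {0<..<\<epsilon>} \<in> p \<oplus> q" if "\<epsilon> > 0" for \<epsilon>
  proof -
    have "S \<inter> {0<..<\<epsilon>/2} \<subseteq> lshift S x (S \<inter> {0<..<\<epsilon>})" if "x \<in> S \<inter> {0<..<\<epsilon>/2}" for x
      using that add_mem by (auto simp: lshift_def)
    then have "lshift S x (S \<inter> {0<..<\<epsilon>}) \<in> q" if "x \<in> S \<inter> {0<..<\<epsilon>/2}" for x
      using that ultrafilter_on_mono[OF Oplus_ultrafilter[OF q] Oplus_near_zero[OF q] _ lshift_subset]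
        \<open>\<epsilon> > 0\<close> by (metis half_gt_zero)
    then have "S \<inter> {0<..<\<epsilon>/2} \<subseteq> {x\<in>S. lshift S x (S \<inter> {0<..<\<epsilon>}) \<in> q}"
      by blast
    then have "{x\<in>S. lshift S x (S \<inter> {0<..<\<epsilon>}) \<in> q} \<in> p"
      by (rule ultrafilter_on_mono[OF Oplus_ultrafilter[OF p] Oplus_near_zero[OF p half_gt_zero[OF that]]])
        blast
    then show ?thesis
      by (simp add: mem_uplus_iff)
  qed
  then show ?thesis
    using ultrafilter_on_uplus[OF Oplus_ultrafilter[OF p] Oplus_ultrafilter[OF q]]
    by (simp add: Oplus_def betaS_def)
qed

lemma Oplus_assoc: "p \<in> Oplus S \<Longrightarrow> q \<in> Oplus S \<Longrightarrow> r \<in> Oplus S \<Longrightarrow> (p \<oplus> q) \<oplus> r = p \<oplus> (q \<oplus> r)"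
  using uplus_assoc Oplus_ultrafilter by blast

end

locale dense_positive_subsemigroup =
  fixes S :: "real set"
  assumes dense: "dense_subsemigroup S"
begin

sublocale real_subsemigroup
  using dense by unfold_locales (simp add: dense_subsemigroup_def)

lemma near_zero_nonempty:
  assumes "\<epsilon> > 0"
  shows "S \<inter> {0<..<\<epsilon>} \<noteq> {}"
proof -
  have "\<epsilon>/2 \<in> closure S"
    using dense assms by (auto simp: dense_subsemigroup_def)
  then obtain y where "y \<in> S" "dist y (\<epsilon>/2) < \<epsilon>/2"
    using assms closure_approachable[of "\<epsilon>/2" S] half_gt_zero by blast
  then have "\<bar>y - \<epsilon>/2\<bar> < \<epsilon>/2"
    by (simp only: dist_real_def)
  then have "0 < y" "y < \<epsilon>"
    by arith+
  then have "y \<in> S \<inter> {0<..<\<epsilon>}"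
    using \<open>y \<in> S\<close> by auto
  then show ?thesis
    by blast
qed

lemma Oplus_nonempty: "Oplus S \<noteq> {}"
  using ex_Oplus_superset[of "{S}" S] near_zero_nonempty by auto

lemma left_ideal_Oplus: "left_ideal S (Oplus S)"
  unfolding left_ideal_def using Oplus_nonempty uplus_Oplus by blast

lemma left_ideal_image_uplus_right:
  assumes L: "left_ideal S L" and p: "p \<in> Oplus S"
  shows "left_ideal S ((\<lambda>q. q \<oplus> p) ` L)"
  unfolding left_ideal_def
proof (intro conjI ballI)
  show "(\<lambda>q. q \<oplus> p) ` L \<noteq> {}"
    using left_idealD(1)[OF L] by simp
  show "(\<lambda>q. q \<oplus> p) ` L \<subseteq> Oplus S"
    using uplus_Oplus p left_idealD(2)[OF L] by blast
next
  fix r x assume r: "r \<in> Oplus S" and "x \<in> (\<lambda>q. q \<oplus> p) ` L"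
  then obtain q where q: "q \<in> L" "x = q \<oplus> p"
    by blast
  then have "r \<oplus> x = (r \<oplus> q) \<oplus> p"
    using Oplus_assoc r p left_idealD(2)[OF L] by blast
  then show "r \<oplus> x \<in> (\<lambda>q. q \<oplus> p) ` L"
    using left_idealD(3)[OF L r q(1)] by blast
qed

lemma left_ideal_orbit: "p \<in> Oplus S \<Longrightarrow> left_ideal S ((\<lambda>q. q \<oplus> p) ` Oplus S)"
  using left_ideal_image_uplus_right[OF left_ideal_Oplus] .

lemma beta_closed_orbit: "p \<in> Oplus S \<Longrightarrow> beta_closed S ((\<lambda>q. q \<oplus> p) ` Oplus S)"
  using beta_closed_image_uplus_right[OF beta_closed_Oplus Oplus_ultrafilter] .

lemma orbit_subset_left_ideal: "left_ideal S L \<Longrightarrow> q \<in> L \<Longrightarrow> (\<lambda>r. r \<oplus> q) ` Oplus S \<subseteq> L"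
  using left_idealD(3) by blast

lemma minimal_left_ideal_eq_orbit:
  assumes L: "minimal_left_ideal S L" and "q \<in> L"
  shows "(\<lambda>r. r \<oplus> q) ` Oplus S = L"
proof -
  have "left_ideal S L"
    using L by (simp add: minimal_left_ideal_def)
  then have "q \<in> Oplus S" "(\<lambda>r. r \<oplus> q) ` Oplus S \<subseteq> L"
    using left_idealD(2) orbit_subset_left_ideal \<open>q \<in> L\<close> by blast+
  then show ?thesis
    using L left_ideal_orbit unfolding minimal_left_ideal_def by blast
qed

lemma beta_closed_minimal_left_ideal:
  assumes L: "minimal_left_ideal S L"
  shows "beta_closed S L"
proof -
  obtain q where "q \<in> L"
    using L unfolding minimal_left_ideal_def left_ideal_def by blast
  moreover from this have "q \<in> Oplus S"
    using L unfolding minimal_left_ideal_def left_ideal_def by blast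
  ultimately show ?thesis
    using beta_closed_orbit minimal_left_ideal_eq_orbit[OF L] by metis
qed

lemma minimal_left_ideal_exists_in:
  assumes "left_ideal S L\<^sub>0" "beta_closed S L\<^sub>0"
  shows "\<exists>L. minimal_left_ideal S L \<and> L \<subseteq> L\<^sub>0"
proof -
  define \<P> where "\<P> = {N. left_ideal S N \<and> beta_closed S N}"
  have "\<Inter>\<C> \<in> \<P>" if \<C>: "\<C> \<noteq> {}" "\<C> \<subseteq> \<P>" "\<Inter>\<C> \<noteq> {}" for \<C>
  proof -
    have "beta_closed S (\<Inter>\<C>)"
      using \<C>(2) by (intro beta_closed_Inter[OF \<C>(1)]) (auto simp: \<P>_def)
    moreover have "\<Inter>\<C> \<subseteq> Oplus S"
      using \<C>(1,2) unfolding \<P>_def left_ideal_def by blast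
    moreover have "p \<oplus> q \<in> \<Inter>\<C>" if "p \<in> Oplus S" "q \<in> \<Inter>\<C>" for p q
      using that \<C>(2) left_idealD(3) unfolding \<P>_def by blast
    ultimately show ?thesis
      using \<C>(3) unfolding \<P>_def left_ideal_def by blast
  qed
  then have "\<exists>M\<in>\<P>. M \<subseteq> L\<^sub>0 \<and> (\<forall>N\<in>\<P>. N \<subseteq> M \<longrightarrow> N = M)"
    by (intro beta_closed_minimal_exists) (use assms in \<open>auto simp: \<P>_def left_ideal_def\<close>)
  then obtain M where M: "M \<in> \<P>" "M \<subseteq> L\<^sub>0" and min: "\<And>N. N \<in> \<P> \<Longrightarrow> N \<subseteq> M \<Longrightarrow> N = M"
    by blast
  have "J = M" if J: "left_ideal S J" "J \<subseteq> M" for J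
  proof -
    obtain j where "j \<in> J"
      using left_idealD(1)[OF J(1)] by blast
    then have "j \<in> Oplus S" "(\<lambda>r. r \<oplus> j) ` Oplus S \<subseteq> J"
      using left_idealD(2)[OF J(1)] orbit_subset_left_ideal[OF J(1)] by blast+
    moreover from this have "(\<lambda>r. r \<oplus> j) ` Oplus S \<in> \<P>"
      using left_ideal_orbit beta_closed_orbit unfolding \<P>_def by blast
    ultimately have "(\<lambda>r. r \<oplus> j) ` Oplus S = M"
      using min J(2) by blast
    then show ?thesis
      using \<open>(\<lambda>r. r \<oplus> j) ` Oplus S \<subseteq> J\<close> J(2) by blast
  qed
  then show ?thesis
    using M unfolding minimal_left_ideal_def \<P>_def by blast
qed

lemma minimal_left_ideal_right_translate:
  assumes L: "minimal_left_ideal S L" and p: "p \<in> Oplus S"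
  shows "minimal_left_ideal S ((\<lambda>q. q \<oplus> p) ` L)"
proof -
  have LI: "left_ideal S L"
    using minimal_left_ideal_left_ideal[OF L] .
  note L_sub = left_idealD(2)[OF LI]
  have "J = (\<lambda>q. q \<oplus> p) ` L" if J: "left_ideal S J" "J \<subseteq> (\<lambda>q. q \<oplus> p) ` L" for J
  proof -
    define M where "M = {q\<in>L. q \<oplus> p \<in> J}"
    have "left_ideal S M"
      unfolding left_ideal_def
    proof (intro conjI ballI)
      show "M \<noteq> {}"
        using left_idealD(1)[OF J(1)] J(2) unfolding M_def by blast
      show "M \<subseteq> Oplus S"
        using L_sub unfolding M_def by blast
    next
      fix r q assume r: "r \<in> Oplus S" and "q \<in> M"
      then have q: "q \<in> L" "q \<oplus> p \<in> J"
        unfolding M_def by blast+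
      have "(r \<oplus> q) \<oplus> p = r \<oplus> (q \<oplus> p)"
        using Oplus_assoc r q(1) p L_sub by blast
      then show "r \<oplus> q \<in> M"
        using left_idealD(3)[OF J(1) r q(2)] left_idealD(3)[OF LI r q(1)] unfolding M_def by simp
    qed
    then have "M = L"
      using L unfolding minimal_left_ideal_def M_def by blast
    then show ?thesis
      using J(2) unfolding M_def by blast
  qed
  then show ?thesis
    using left_ideal_image_uplus_right[OF LI p] unfolding minimal_left_ideal_def by blast
qed

lemma two_sided_ideal_Union_minimal_left_ideals:
  "two_sided_ideal S (Oplus S) (\<Union>{L. minimal_left_ideal S L})"
  unfolding two_sided_ideal_def
proof (intro conjI ballI)
  obtain L where "minimal_left_ideal S L"
    using minimal_left_ideal_exists_in[OF left_ideal_Oplus beta_closed_Oplus] by blast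
  then show "\<Union>{L. minimal_left_ideal S L} \<noteq> {}"
    using left_idealD(1)[OF minimal_left_ideal_left_ideal] by blast
  show "\<Union>{L. minimal_left_ideal S L} \<subseteq> Oplus S"
    using left_idealD(2)[OF minimal_left_ideal_left_ideal] by blast
next
  fix p q assume p: "p \<in> Oplus S" and "q \<in> \<Union>{L. minimal_left_ideal S L}"
  then obtain L where L: "minimal_left_ideal S L" "q \<in> L"
    by blast
  then have "p \<oplus> q \<in> L"
    using left_idealD(3)[OF minimal_left_ideal_left_ideal[OF L(1)] p] by blast
  then show "p \<oplus> q \<in> \<Union>{L. minimal_left_ideal S L}"
    using L(1) by blast
  have "q \<oplus> p \<in> (\<lambda>q. q \<oplus> p) ` L"
    using L(2) by blast
  then show "q \<oplus> p \<in> \<Union>{L. minimal_left_ideal S L}"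
    using minimal_left_ideal_right_translate[OF L(1) p] by blast
qed

lemma minimal_left_ideal_subset_two_sided_ideal:
  assumes L: "minimal_left_ideal S L" and I: "two_sided_ideal S (Oplus S) I"
  shows "L \<subseteq> I"
proof -
  obtain w where "w \<in> I" "w \<in> Oplus S"
    using I unfolding two_sided_ideal_def by blast
  obtain u where "u \<in> L"
    using left_idealD(1)[OF minimal_left_ideal_left_ideal[OF L]] by blast
  then have "u \<in> Oplus S"
    using left_idealD(2)[OF minimal_left_ideal_left_ideal[OF L]] by blast
  then have "w \<oplus> u \<in> I" "w \<oplus> u \<in> L"
    using I \<open>w \<in> I\<close> left_idealD(3)[OF minimal_left_ideal_left_ideal[OF L] \<open>w \<in> Oplus S\<close> \<open>u \<in> L\<close>]
    unfolding two_sided_ideal_def by blast+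
  then have "L = (\<lambda>r. r \<oplus> (w \<oplus> u)) ` Oplus S"
    using minimal_left_ideal_eq_orbit[OF L] by simp
  also have "\<dots> \<subseteq> I"
    using I \<open>w \<oplus> u \<in> I\<close> unfolding two_sided_ideal_def by blast
  finally show ?thesis .
qed

lemma Kideal_Oplus_eq: "Kideal S (Oplus S) = \<Union>{L. minimal_left_ideal S L}"
  unfolding Kideal_def
proof
  show "\<Inter>{I. two_sided_ideal S (Oplus S) I} \<subseteq> \<Union>{L. minimal_left_ideal S L}"
    by (rule Inter_lower) (simp add: two_sided_ideal_Union_minimal_left_ideals)
  show "\<Union>{L. minimal_left_ideal S L} \<subseteq> \<Inter>{I. two_sided_ideal S (Oplus S) I}"
    by (intro Inter_greatest Union_least) (simp add: minimal_left_ideal_subset_two_sided_ideal)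
qed

end

section \<open>The action of \<open>\<beta>S\<close> on a dynamical system\<close>

lemma neighbourhood_Int:
  assumes "neighbourhood X A U" "neighbourhood X A V"
  shows "neighbourhood X A (U \<inter> V)"
proof -
  obtain U' V' where "openin X U'" "A \<subseteq> U'" "U' \<subseteq> U" "openin X V'" "A \<subseteq> V'" "V' \<subseteq> V"
    using assms unfolding neighbourhood_def by blast
  then have "openin X (U' \<inter> V') \<and> A \<subseteq> U' \<inter> V' \<and> U' \<inter> V' \<subseteq> U \<inter> V"
    by blast
  then show ?thesis
    using assms unfolding neighbourhood_def by blast
qed

lemma Hausdorff_closure_of_nhds_eq:
  assumes "Hausdorff_space X" "y \<in> topspace X"
    and closure: "\<And>W. openin X W \<Longrightarrow> y \<in> W \<Longrightarrow> z \<in> X closure_of W"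
  shows "z = y"
proof (rule ccontr)
  assume "z \<noteq> y"
  moreover have "z \<in> topspace X"
    using closure[OF openin_topspace assms(2)] by (simp add: in_closure_of)
  ultimately obtain U V where "openin X U" "openin X V" "y \<in> U" "z \<in> V" "disjnt U V"
    using assms(1,2) unfolding Hausdorff_space_def by metis
  then show False
    using closure[of U] unfolding in_closure_of disjnt_def by blast
qed

locale near_zero_dynamics = dense_positive_subsemigroup +
  fixes X :: "'a topology" and T :: "real \<Rightarrow> 'a \<Rightarrow> 'a"
  assumes dynamical: "dynamical_system X S T"
begin

lemma compact: "compact_space X"
  and Hausdorff: "Hausdorff_space X"
  and continuous: "s \<in> S \<Longrightarrow> continuous_map X X (T s)"
  and T_add: "s \<in> S \<Longrightarrow> t \<in> S \<Longrightarrow> z \<in> topspace X \<Longrightarrow> T s (T t z) = T (s + t) z"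
  using dynamical by (auto simp: dynamical_system_def)

lemma T_in_topspace: "s \<in> S \<Longrightarrow> z \<in> topspace X \<Longrightarrow> T s z \<in> topspace X"
  using continuous_map_image_subset_topspace[OF continuous] by blast

definition orbit_converges :: "real set set \<Rightarrow> 'a \<Rightarrow> 'a \<Rightarrow> bool" where
  "orbit_converges p z w \<longleftrightarrow> w \<in> topspace X \<and> (\<forall>U. openin X U \<and> w \<in> U \<longrightarrow> {s\<in>S. T s z \<in> U} \<in> p)"

lemma orbit_converges_exists:
  assumes p: "ultrafilter_on S p" and z: "z \<in> topspace X"
  shows "\<exists>w. orbit_converges p z w"
proof (rule ccontr)
  assume "\<nexists>w. orbit_converges p z w"
  then have "\<forall>w\<in>topspace X. \<exists>U. openin X U \<and> w \<in> U \<and> {s\<in>S. T s z \<in> U} \<notin> p"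
    unfolding orbit_converges_def by blast
  then obtain U where U: "\<And>w. w \<in> topspace X \<Longrightarrow> openin X (U w) \<and> w \<in> U w \<and> {s\<in>S. T s z \<in> U w} \<notin> p"
    by metis
  have "topspace X \<subseteq> \<Union>(U ` topspace X)" "\<forall>V \<in> U ` topspace X. openin X V"
    using U by blast+
  then obtain \<F> where \<F>: "finite \<F>" "\<F> \<subseteq> U ` topspace X" "topspace X \<subseteq> \<Union>\<F>"
    using compact[unfolded compact_space_alt, rule_format, of "U ` topspace X"] by blast
  then obtain G where G: "G \<subseteq> topspace X" "finite G" "\<F> = U ` G"
    using finite_subset_image[OF \<F>(1,2)] by blast
  have "S \<subseteq> (\<Union>w\<in>G. {s\<in>S. T s z \<in> U w})"
  proof
    fix s assume "s \<in> S"
    then have "T s z \<in> topspace X"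
      using T_in_topspace z by blast
    then obtain w where "w \<in> G" "T s z \<in> U w"
      using \<F>(3) G(3) by blast
    then show "s \<in> (\<Union>w\<in>G. {s\<in>S. T s z \<in> U w})"
      using \<open>s \<in> S\<close> by blast
  qed
  then have "(\<Union>w\<in>G. {s\<in>S. T s z \<in> U w}) \<in> p"
    using ultrafilter_on_mono[OF p ultrafilter_on_carrier[OF p]] by blast
  then obtain w where "w \<in> G" "{s\<in>S. T s z \<in> U w} \<in> p"
    using ultrafilter_on_UN[OF p G(2), of "\<lambda>w. {s\<in>S. T s z \<in> U w}"] by blast
  then show False
    using U G(1) by blast
qed

lemma orbit_converges_unique:
  assumes p: "ultrafilter_on S p" and "orbit_converges p z w\<^sub>1" "orbit_converges p z w\<^sub>2"
  shows "w\<^sub>1 = w\<^sub>2"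
proof (rule ccontr)
  assume ne: "w\<^sub>1 \<noteq> w\<^sub>2"
  have w: "w\<^sub>1 \<in> topspace X" "w\<^sub>2 \<in> topspace X"
    using assms(2,3) by (auto simp: orbit_converges_def)
  obtain U V where UV: "openin X U" "openin X V" "w\<^sub>1 \<in> U" "w\<^sub>2 \<in> V" "disjnt U V"
    using Hausdorff w ne unfolding Hausdorff_space_def by metis
  have "{s\<in>S. T s z \<in> U} \<in> p" "{s\<in>S. T s z \<in> V} \<in> p"
    using assms(2,3) UV unfolding orbit_converges_def by blast+
  then have "{s\<in>S. T s z \<in> U} \<inter> {s\<in>S. T s z \<in> V} \<noteq> {}"
    using ultrafilter_on_Int_nonempty[OF p] by blast
  then show False
    using UV(5) by (auto simp: disjnt_def)
qed

lemma orbit_converges_Tp: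
  assumes p: "ultrafilter_on S p" and z: "z \<in> topspace X"
  shows "orbit_converges p z (Tp X S T p z)"
proof -
  obtain w where w: "orbit_converges p z w"
    using orbit_converges_exists[OF p z] by blast
  have "Tp X S T p z = w"
    unfolding Tp_def
  proof (rule the_equality)
    show "w \<in> topspace X \<and> (\<forall>U. openin X U \<and> w \<in> U \<longrightarrow> {s\<in>S. T s z \<in> U} \<in> p)"
      using w by (simp add: orbit_converges_def)
    show "w' = w" if "w' \<in> topspace X \<and> (\<forall>U. openin X U \<and> w' \<in> U \<longrightarrow> {s\<in>S. T s z \<in> U} \<in> p)" for w'
      using orbit_converges_unique[OF p _ w] that by (simp add: orbit_converges_def)
  qed
  then show ?thesis
    using w by simp
qed

lemma Tp_eqI: "ultrafilter_on S p \<Longrightarrow> z \<in> topspace X \<Longrightarrow> orbit_converges p z w \<Longrightarrow> Tp X S T p z = w"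
  using orbit_converges_unique orbit_converges_Tp by blast

lemma Tp_in_topspace: "ultrafilter_on S p \<Longrightarrow> z \<in> topspace X \<Longrightarrow> Tp X S T p z \<in> topspace X"
  using orbit_converges_Tp by (simp add: orbit_converges_def)

lemma Tp_nhds:
  "ultrafilter_on S p \<Longrightarrow> z \<in> topspace X \<Longrightarrow> openin X U \<Longrightarrow> Tp X S T p z \<in> U \<Longrightarrow> {s\<in>S. T s z \<in> U} \<in> p"
  using orbit_converges_Tp by (simp add: orbit_converges_def)

lemma lshift_return_set:
  assumes q: "ultrafilter_on S q" and z: "z \<in> topspace X" and t: "t \<in> S"
    and U: "openin X U" and "T t (Tp X S T q z) \<in> U"
  shows "lshift S t {s\<in>S. T s z \<in> U} \<in> q"
proof -
  define V where "V = {v \<in> topspace X. T t v \<in> U}"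
  have "openin X V"
    unfolding V_def using openin_continuous_map_preimage[OF continuous[OF t] U] .
  moreover have "Tp X S T q z \<in> V"
    using assms(5) Tp_in_topspace[OF q z] unfolding V_def by blast
  ultimately have "{s\<in>S. T s z \<in> V} \<in> q"
    using Tp_nhds[OF q z] by blast
  moreover have "{s\<in>S. T s z \<in> V} \<subseteq> lshift S t {s\<in>S. T s z \<in> U}"
    using T_add[OF t _ z] add_mem[OF t] unfolding V_def lshift_def by auto
  ultimately show ?thesis
    using ultrafilter_on_mono[OF q] lshift_subset by blast
qed

lemma Tp_uplus:
  assumes p: "ultrafilter_on S p" and q: "ultrafilter_on S q" and x: "x \<in> topspace X"
  shows "Tp X S T (p \<oplus> q) x = Tp X S T p (Tp X S T q x)"
proof (rule Tp_eqI[OF ultrafilter_on_uplus[OF p q] x])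
  define z where "z = Tp X S T q x"
  have z: "z \<in> topspace X"
    using Tp_in_topspace[OF q x] by (simp add: z_def)
  show "orbit_converges (p \<oplus> q) x (Tp X S T p z)"
    unfolding orbit_converges_def
  proof (intro conjI allI impI)
    show "Tp X S T p z \<in> topspace X"
      using Tp_in_topspace[OF p z] .
    fix U assume U: "openin X U \<and> Tp X S T p z \<in> U"
    then have "{s\<in>S. T s z \<in> U} \<in> p"
      using Tp_nhds[OF p z] by blast
    moreover have "{s\<in>S. T s z \<in> U} \<subseteq> {s\<in>S. lshift S s {t\<in>S. T t x \<in> U} \<in> q}"
      using lshift_return_set[OF q x _ U[THEN conjunct1]] unfolding z_def by blast
    ultimately have "{s\<in>S. lshift S s {t\<in>S. T t x \<in> U} \<in> q} \<in> p"
      using ultrafilter_on_mono[OF p] by blast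
    then show "{s\<in>S. T s x \<in> U} \<in> p \<oplus> q"
      by (simp add: mem_uplus_iff)
  qed
qed

lemma Tp_in_closure_of:
  assumes p: "ultrafilter_on S p" and y: "y \<in> topspace X" and "{s\<in>S. T s y \<in> W} \<in> p"
  shows "Tp X S T p y \<in> X closure_of W"
  unfolding in_closure_of
proof (intro conjI allI impI)
  show "Tp X S T p y \<in> topspace X"
    using Tp_in_topspace[OF p y] .
  fix V assume "Tp X S T p y \<in> V \<and> openin X V"
  then have "{s\<in>S. T s y \<in> V} \<in> p"
    using Tp_nhds[OF p y] by blast
  then have "{s\<in>S. T s y \<in> V} \<inter> {s\<in>S. T s y \<in> W} \<noteq> {}"
    using ultrafilter_on_Int_nonempty[OF p] assms(3) by blast
  then show "\<exists>w. w \<in> W \<and> w \<in> V"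
    by blast
qed

lemma beta_closed_Tp_preimage:
  assumes C: "beta_closed S C" and K: "closedin X K" and y: "y \<in> topspace X"
  shows "beta_closed S {q\<in>C. Tp X S T q y \<in> K}"
proof (rule beta_closedI)
  show "ultrafilter_on S q" if "q \<in> {q\<in>C. Tp X S T q y \<in> K}" for q
    using that beta_closed_subset[OF C] by blast
next
  fix r assume r: "ultrafilter_on S r" and meets: "\<forall>A\<in>r. \<exists>q\<in>{q\<in>C. Tp X S T q y \<in> K}. A \<in> q"
  have "r \<in> C"
    by (rule beta_closedD[OF C r]) (use meets in blast)
  moreover have "Tp X S T r y \<in> K"
  proof (rule ccontr)
    assume "Tp X S T r y \<notin> K"
    then have "Tp X S T r y \<in> topspace X - K"
      using Tp_in_topspace[OF r y] by blast
    then obtain U V where UV: "openin X U" "openin X V" "Tp X S T r y \<in> U" "K \<subseteq> V" "disjnt U V"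
      using compact_Hausdorff_imp_regular_space[OF compact Hausdorff] K
      unfolding regular_space_def by metis
    then obtain q where q: "q \<in> C" "Tp X S T q y \<in> K" "{s\<in>S. T s y \<in> U} \<in> q"
      using meets Tp_nhds[OF r y] by blast
    have uq: "ultrafilter_on S q"
      using beta_closed_subset[OF C q(1)] .
    then have "{s\<in>S. T s y \<in> V} \<in> q"
      using Tp_nhds[OF uq y UV(2)] q(2) UV(4) by blast
    then show False
      using ultrafilter_on_Int_nonempty[OF uq q(3)] UV(5) by (auto simp: disjnt_def)
  qed
  ultimately show "r \<in> {q\<in>C. Tp X S T q y \<in> K}"
    by blast
qed

lemma Tp_pair_nhds:
  assumes p: "ultrafilter_on S p" and x: "x \<in> topspace X" and y: "y \<in> topspace X"
    and V: "openin (prod_topology X X) V" "(Tp X S T p x, Tp X S T p y) \<in> V"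
  shows "{s\<in>S. (T s x, T s y) \<in> V} \<in> p"
proof -
  obtain A B where AB: "openin X A" "openin X B" "Tp X S T p x \<in> A" "Tp X S T p y \<in> B" "A \<times> B \<subseteq> V"
    using V(1)[unfolded openin_prod_topology_alt, rule_format, OF V(2)] by blast
  have "{s\<in>S. T s x \<in> A} \<inter> {s\<in>S. T s y \<in> B} \<in> p"
    using ultrafilter_on_Int[OF p Tp_nhds[OF p x AB(1,3)] Tp_nhds[OF p y AB(2,4)]] .
  moreover have "{s\<in>S. T s x \<in> A} \<inter> {s\<in>S. T s y \<in> B} \<subseteq> {s\<in>S. (T s x, T s y) \<in> V}"
    using AB(5) by blast
  ultimately show ?thesis
    using ultrafilter_on_mono[OF p] by blast
qed

end

section \<open>Proximality and uniform recurrence near zero\<close>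

context dense_positive_subsemigroup
begin

lemma ex_Oplus_avoiding_translates:
  assumes no_cover: "\<not> (\<exists>F. finite F \<and> F \<noteq> {} \<and> F \<subseteq> {0<..<\<epsilon>} \<inter> S
      \<and> (\<exists>\<delta>>0. S \<inter> {0<..<\<delta>} \<subseteq> (\<Union>t\<in>F. lshift S t B)))"
  shows "\<exists>q\<in>Oplus S. \<forall>t\<in>S \<inter> {0<..<\<epsilon>}. lshift S t B \<notin> q"
proof -
  define \<A> where "\<A> = {S - (\<Union>t\<in>F. lshift S t B) | F. finite F \<and> F \<subseteq> {0<..<\<epsilon>} \<inter> S}"
  have "\<exists>q\<in>Oplus S. \<A> \<subseteq> q"
  proof (rule ex_Oplus_superset)
    show "\<A> \<noteq> {}" "\<A> \<subseteq> Pow S"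
      unfolding \<A>_def by blast+
    show "\<exists>C\<in>\<A>. C \<subseteq> A\<^sub>1 \<inter> A\<^sub>2" if A12: "A\<^sub>1 \<in> \<A>" "A\<^sub>2 \<in> \<A>" for A\<^sub>1 A\<^sub>2
    proof -
      obtain F\<^sub>1 F\<^sub>2 where A: "A\<^sub>1 = S - (\<Union>t\<in>F\<^sub>1. lshift S t B)" "A\<^sub>2 = S - (\<Union>t\<in>F\<^sub>2. lshift S t B)"
        and F: "finite (F\<^sub>1 \<union> F\<^sub>2)" "F\<^sub>1 \<union> F\<^sub>2 \<subseteq> {0<..<\<epsilon>} \<inter> S"
        using A12 unfolding \<A>_def by blast
      have "A\<^sub>1 \<inter> A\<^sub>2 = S - (\<Union>t\<in>F\<^sub>1 \<union> F\<^sub>2. lshift S t B)"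
        unfolding A by blast
      moreover have "S - (\<Union>t\<in>F\<^sub>1 \<union> F\<^sub>2. lshift S t B) \<in> \<A>"
        using F unfolding \<A>_def by blast
      ultimately show ?thesis
        by blast
    qed
    show "A \<inter> {0<..<\<delta>} \<noteq> {}" if "A \<in> \<A>" "\<delta> > 0" for A \<delta>
    proof -
      obtain F where F: "A = S - (\<Union>t\<in>F. lshift S t B)" "finite F" "F \<subseteq> {0<..<\<epsilon>} \<inter> S"
        using \<open>A \<in> \<A>\<close> unfolding \<A>_def by blast
      show ?thesis
      proof (cases "F = {}")
        case True
        then show ?thesis
          using near_zero_nonempty[OF \<open>\<delta> > 0\<close>] F(1) by auto
      next
        case False
        then have "\<not> S \<inter> {0<..<\<delta>} \<subseteq> (\<Union>t\<in>F. lshift S t B)"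
          using no_cover F(2,3) \<open>\<delta> > 0\<close> by blast
        then show ?thesis
          using F(1) by blast
      qed
    qed
  qed
  then obtain q where q: "q \<in> Oplus S" "\<A> \<subseteq> q"
    by blast
  have "lshift S t B \<notin> q" if "t \<in> S \<inter> {0<..<\<epsilon>}" for t
  proof -
    have "S - (\<Union>t'\<in>{t}. lshift S t' B) \<in> \<A>"
      using that unfolding \<A>_def by blast
    then have "S - lshift S t B \<in> q"
      using q(2) by auto
    then show ?thesis
      using ultrafilter_on_compl_iff[OF Oplus_ultrafilter[OF q(1)] lshift_subset] by blast
  qed
  with q(1) show ?thesis
    by blast
qed

lemma syndetic_near_zero_iff:
  "syndetic_near_zero S B \<longleftrightarrow> (\<forall>q\<in>Oplus S. \<forall>\<epsilon>>0. \<exists>t\<in>S \<inter> {0<..<\<epsilon>}. lshift S t B \<in> q)"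
proof
  assume syndetic: "syndetic_near_zero S B"
  show "\<forall>q\<in>Oplus S. \<forall>\<epsilon>>0. \<exists>t\<in>S \<inter> {0<..<\<epsilon>}. lshift S t B \<in> q"
  proof (intro ballI allI impI)
    fix q and \<epsilon> :: real assume q: "q \<in> Oplus S" and "\<epsilon> > 0"
    obtain F \<delta> where F: "finite F" "F \<subseteq> {0<..<\<epsilon>} \<inter> S" "\<delta> > 0"
      and cover: "S \<inter> {0<..<\<delta>} \<subseteq> (\<Union>t\<in>F. lshift S t B)"
      using syndetic[unfolded syndetic_near_zero_def, rule_format, OF \<open>\<epsilon> > 0\<close>] by blast
    have "(\<Union>t\<in>F. lshift S t B) \<subseteq> S"
      using lshift_subset by (rule UN_least)
    then have "(\<Union>t\<in>F. lshift S t B) \<in> q"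
      using ultrafilter_on_mono[OF Oplus_ultrafilter[OF q] Oplus_near_zero[OF q \<open>\<delta> > 0\<close>] cover] by blast
    then obtain t where "t \<in> F" "lshift S t B \<in> q"
      using ultrafilter_on_UN[OF Oplus_ultrafilter[OF q] F(1), of "\<lambda>t. lshift S t B"] lshift_subset by blast
    then show "\<exists>t\<in>S \<inter> {0<..<\<epsilon>}. lshift S t B \<in> q"
      using F(2) by blast
  qed
next
  assume returns: "\<forall>q\<in>Oplus S. \<forall>\<epsilon>>0. \<exists>t\<in>S \<inter> {0<..<\<epsilon>}. lshift S t B \<in> q"
  show "syndetic_near_zero S B"
    unfolding syndetic_near_zero_def
  proof (intro allI impI)
    fix \<epsilon> :: real assume "\<epsilon> > 0"
    show "\<exists>F. finite F \<and> F \<noteq> {} \<and> F \<subseteq> {0<..<\<epsilon>} \<inter> S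
      \<and> (\<exists>\<delta>>0. S \<inter> {0<..<\<delta>} \<subseteq> (\<Union>t\<in>F. lshift S t B))"
    proof (rule ccontr)
      assume "\<not> ?thesis"
      then have "\<exists>q\<in>Oplus S. \<forall>t\<in>S \<inter> {0<..<\<epsilon>}. lshift S t B \<notin> q"
        by (rule ex_Oplus_avoiding_translates)
      then obtain q where "q \<in> Oplus S" "\<forall>t\<in>S \<inter> {0<..<\<epsilon>}. lshift S t B \<notin> q"
        by blast
      then show False
        using returns \<open>\<epsilon> > 0\<close> by blast
    qed
  qed
qed

lemma syndetic_near_zero_left_ideal:
  assumes B: "syndetic_near_zero S B" "B \<subseteq> S" and L: "left_ideal S L"
  shows "\<exists>q\<in>L. B \<in> q"
proof -
  obtain p where "p \<in> L"
    using left_idealD(1)[OF L] by blast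
  then have p: "p \<in> Oplus S"
    using left_idealD(2)[OF L] by blast
  define D where "D = {t\<in>S. lshift S t B \<in> p}"
  have "\<exists>r\<in>Oplus S. {D} \<subseteq> r"
  proof (rule ex_Oplus_superset)
    show "A \<inter> {0<..<\<epsilon>} \<noteq> {}" if "A \<in> {D}" "\<epsilon> > 0" for A \<epsilon>
    proof -
      obtain t where "t \<in> S \<inter> {0<..<\<epsilon>}" "lshift S t B \<in> p"
        using B(1) p \<open>\<epsilon> > 0\<close> unfolding syndetic_near_zero_iff by blast
      then show ?thesis
        using \<open>A \<in> {D}\<close> unfolding D_def by blast
    qed
  qed (auto simp: D_def)
  then obtain r where r: "r \<in> Oplus S" "D \<in> r"
    by blast
  then have "B \<in> r \<oplus> p"
    using B(2) by (simp add: mem_uplus_iff D_def)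
  moreover have "r \<oplus> p \<in> L"
    using left_idealD(3)[OF L r(1) \<open>p \<in> L\<close>] .
  ultimately show ?thesis
    by blast
qed

end

context near_zero_dynamics
begin

lemma Tp_eq_if_near_diagonal:
  assumes p: "ultrafilter_on S p" and x: "x \<in> topspace X" and y: "y \<in> topspace X"
    and near: "\<And>V. openin (prod_topology X X) V \<Longrightarrow> {(z, z) | z. z \<in> topspace X} \<subseteq> V
      \<Longrightarrow> {s\<in>S. (T s x, T s y) \<in> V} \<in> p"
  shows "Tp X S T p x = Tp X S T p y"
proof (rule ccontr)
  define \<Delta> where "\<Delta> = {(z, z) | z. z \<in> topspace X}"
  assume ne: "Tp X S T p x \<noteq> Tp X S T p y"
  have "regular_space (prod_topology X X)"
    using compact Hausdorff by (intro compact_Hausdorff_imp_regular_space)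
      (simp_all add: compact_space_prod_topology Hausdorff_space_prod_topology)
  moreover have "\<Delta> = (\<lambda>z. (z, z)) ` topspace X"
    unfolding \<Delta>_def by blast
  then have "closedin (prod_topology X X) \<Delta>"
    using Hausdorff_space_closedin_diagonal[of X] Hausdorff by simp
  moreover have "(Tp X S T p x, Tp X S T p y) \<in> topspace (prod_topology X X) - \<Delta>"
    using ne Tp_in_topspace[OF p x] Tp_in_topspace[OF p y] unfolding \<Delta>_def by auto
  ultimately obtain U V where UV: "openin (prod_topology X X) U" "openin (prod_topology X X) V"
    "(Tp X S T p x, Tp X S T p y) \<in> U" "\<Delta> \<subseteq> V" "disjnt U V"
    unfolding regular_space_def by metis
  have "{s\<in>S. (T s x, T s y) \<in> V} \<in> p"
    using near UV(2,4) unfolding \<Delta>_def by blast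
  moreover have "{s\<in>S. (T s x, T s y) \<in> U} \<in> p"
    using Tp_pair_nhds[OF p x y UV(1,3)] .
  ultimately show False
    using ultrafilter_on_Int_nonempty[OF p] UV(5) by (auto simp: disjnt_def)
qed

lemma Tp_eq_if_proximal_near_zero:
  assumes x: "x \<in> topspace X" and y: "y \<in> topspace X" and prox: "proximal_near_zero X S T x y"
  shows "\<exists>p\<in>Oplus S. Tp X S T p x = Tp X S T p y"
proof -
  define \<Delta> where "\<Delta> = {(z, z) | z. z \<in> topspace X}"
  define \<A> where "\<A> = {{s\<in>S. (T s x, T s y) \<in> U} | U. neighbourhood (prod_topology X X) \<Delta> U}"
  have "\<exists>p\<in>Oplus S. \<A> \<subseteq> p"
  proof (rule ex_Oplus_superset)
    have "neighbourhood (prod_topology X X) \<Delta> (topspace (prod_topology X X))"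
      unfolding neighbourhood_def \<Delta>_def by auto
    then show "\<A> \<noteq> {}"
      unfolding \<A>_def by blast
    show "\<A> \<subseteq> Pow S"
      unfolding \<A>_def by blast
    show "\<exists>C\<in>\<A>. C \<subseteq> A\<^sub>1 \<inter> A\<^sub>2" if A12: "A\<^sub>1 \<in> \<A>" "A\<^sub>2 \<in> \<A>" for A\<^sub>1 A\<^sub>2
    proof -
      obtain U\<^sub>1 U\<^sub>2 where "A\<^sub>1 = {s\<in>S. (T s x, T s y) \<in> U\<^sub>1}" "A\<^sub>2 = {s\<in>S. (T s x, T s y) \<in> U\<^sub>2}"
        "neighbourhood (prod_topology X X) \<Delta> U\<^sub>1" "neighbourhood (prod_topology X X) \<Delta> U\<^sub>2"
        using A12 unfolding \<A>_def by blast
      then have "A\<^sub>1 \<inter> A\<^sub>2 \<in> \<A>"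
        unfolding \<A>_def using neighbourhood_Int by blast
      then show ?thesis
        by blast
    qed
    show "A \<inter> {0<..<\<epsilon>} \<noteq> {}" if A: "A \<in> \<A>" "\<epsilon> > 0" for A \<epsilon>
    proof -
      obtain U where "A = {s\<in>S. (T s x, T s y) \<in> U}" "neighbourhood (prod_topology X X) \<Delta> U"
        using A(1) unfolding \<A>_def by blast
      moreover from this obtain s where "s \<in> S \<inter> {0<..<\<epsilon>}" "(T s x, T s y) \<in> U"
        using prox[unfolded proximal_near_zero_def, rule_format, of U \<epsilon>] A(2) unfolding \<Delta>_def by blast
      ultimately show ?thesis
        by blast
    qed
  qed
  then obtain p where p: "p \<in> Oplus S" "\<A> \<subseteq> p"
    by blast
  have "Tp X S T p x = Tp X S T p y"
  proof (rule Tp_eq_if_near_diagonal[OF Oplus_ultrafilter[OF p(1)] x y])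
    fix V assume "openin (prod_topology X X) V" "{(z, z) | z. z \<in> topspace X} \<subseteq> V"
    then have "neighbourhood (prod_topology X X) \<Delta> V"
      using openin_subset unfolding neighbourhood_def \<Delta>_def by blast
    then show "{s\<in>S. (T s x, T s y) \<in> V} \<in> p"
      using p(2) unfolding \<A>_def by blast
  qed
  with p(1) show ?thesis
    by blast
qed

lemma proximal_near_zero_if_Tp_eq:
  assumes x: "x \<in> topspace X" and y: "y \<in> topspace X"
    and p: "p \<in> Oplus S" "Tp X S T p x = Tp X S T p y"
  shows "proximal_near_zero X S T x y"
  unfolding proximal_near_zero_def
proof (intro allI impI)
  have uf: "ultrafilter_on S p"
    using Oplus_ultrafilter[OF p(1)] .
  fix U and \<epsilon> :: real
  assume "neighbourhood (prod_topology X X) {(z, z) |z. z \<in> topspace X} U \<and> \<epsilon> > 0"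
  then obtain V where V: "openin (prod_topology X X) V" "{(z, z) |z. z \<in> topspace X} \<subseteq> V" "V \<subseteq> U"
    and "\<epsilon> > 0"
    unfolding neighbourhood_def by blast
  then have "(Tp X S T p x, Tp X S T p y) \<in> V"
    using p(2) Tp_in_topspace[OF uf y] by auto
  then have "{s\<in>S. (T s x, T s y) \<in> V} \<in> p"
    using Tp_pair_nhds[OF uf x y V(1)] by blast
  then have "{s\<in>S. (T s x, T s y) \<in> V} \<inter> (S \<inter> {0<..<\<epsilon>}) \<noteq> {}"
    using ultrafilter_on_Int_nonempty[OF uf _ Oplus_near_zero[OF p(1) \<open>\<epsilon> > 0\<close>]] by blast
  then show "\<exists>s\<in>S \<inter> {0<..<\<epsilon>}. (T s x, T s y) \<in> U"
    using V(3) by blast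
qed

lemma unif_rec_near_zero_if_fixed:
  assumes L: "minimal_left_ideal S L" and "u \<in> L" and y: "y \<in> topspace X" and fixed: "Tp X S T u y = y"
  shows "unif_rec_near_zero X S T y"
  unfolding unif_rec_near_zero_def
proof (intro allI impI)
  fix W assume "neighbourhood X {y} W"
  then obtain U where U: "openin X U" "y \<in> U" "U \<subseteq> W"
    unfolding neighbourhood_def by blast
  show "syndetic_near_zero S {s\<in>S. T s y \<in> W}"
    unfolding syndetic_near_zero_iff
  proof (intro ballI allI impI)
    fix q and \<epsilon> :: real assume q: "q \<in> Oplus S" and "\<epsilon> > 0"
    have uq: "ultrafilter_on S q"
      using Oplus_ultrafilter[OF q] .
    have LI: "left_ideal S L"
      using minimal_left_ideal_left_ideal[OF L] .
    then have "q \<oplus> u \<in> L" "u \<in> Oplus S"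
      using left_idealD(2,3)[OF LI] q \<open>u \<in> L\<close> by blast+
    \<comment> \<open>\<open>u\<close> lies in the minimal left ideal generated by \<open>q + u\<close>.\<close>
    then obtain r where r: "r \<in> Oplus S" "r \<oplus> (q \<oplus> u) = u"
      using minimal_left_ideal_eq_orbit[OF L] \<open>u \<in> L\<close> by (metis imageE)
    have ur: "ultrafilter_on S r" and uu: "ultrafilter_on S u"
      using Oplus_ultrafilter r(1) \<open>u \<in> Oplus S\<close> by blast+
    define z where "z = Tp X S T q y"
    have z: "z \<in> topspace X"
      using Tp_in_topspace[OF uq y] by (simp add: z_def)
    have "Tp X S T r z = y"
      using Tp_uplus[OF ur ultrafilter_on_uplus[OF uq uu] y] Tp_uplus[OF uq uu y] r(2) fixed
      by (simp add: z_def)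
    then have "{s\<in>S. T s z \<in> U} \<inter> (S \<inter> {0<..<\<epsilon>}) \<noteq> {}"
      using ultrafilter_on_Int_nonempty[OF ur Tp_nhds[OF ur z U(1)] Oplus_near_zero[OF r(1) \<open>\<epsilon> > 0\<close>]]
        U(2) by simp
    then obtain t where t: "t \<in> S \<inter> {0<..<\<epsilon>}" "T t (Tp X S T q y) \<in> U"
      unfolding z_def by blast
    have "lshift S t {s\<in>S. T s y \<in> U} \<in> q"
      using lshift_return_set[OF uq y _ U(1) t(2)] t(1) by blast
    moreover have "lshift S t {s\<in>S. T s y \<in> U} \<subseteq> lshift S t {s\<in>S. T s y \<in> W}"
      using U(3) by (intro lshift_mono) blast
    ultimately have "lshift S t {s\<in>S. T s y \<in> W} \<in> q"
      using ultrafilter_on_mono[OF uq] lshift_subset by blast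
    then show "\<exists>t\<in>S \<inter> {0<..<\<epsilon>}. lshift S t {s\<in>S. T s y \<in> W} \<in> q"
      using t(1) by blast
  qed
qed

lemma left_ideal_Tp_mem_closure:
  assumes y: "y \<in> topspace X" and rec: "unif_rec_near_zero X S T y" and L: "left_ideal S L"
    and W: "openin X W" "y \<in> W"
  shows "\<exists>q\<in>L. Tp X S T q y \<in> X closure_of W"
proof -
  have "neighbourhood X {y} W"
    using W openin_subset[OF W(1)] unfolding neighbourhood_def by blast
  then have "syndetic_near_zero S {s\<in>S. T s y \<in> W}"
    using rec unfolding unif_rec_near_zero_def by blast
  then obtain q where "q \<in> L" "{s\<in>S. T s y \<in> W} \<in> q"
    using syndetic_near_zero_left_ideal[OF _ _ L, of "{s\<in>S. T s y \<in> W}"] by blast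
  moreover have "ultrafilter_on S q"
    using Oplus_ultrafilter left_idealD(2)[OF L] \<open>q \<in> L\<close> by blast
  ultimately show ?thesis
    using Tp_in_closure_of[OF _ y] by blast
qed

lemma closed_left_ideal_fixes_unif_rec:
  assumes y: "y \<in> topspace X" and rec: "unif_rec_near_zero X S T y"
    and L: "left_ideal S L" "beta_closed S L"
  shows "\<exists>q\<in>L. Tp X S T q y = y"
proof -
  define C where "C W = {q\<in>L. Tp X S T q y \<in> X closure_of W}" for W
  have "\<Inter>(C ` {W. openin X W \<and> y \<in> W}) \<noteq> {}"
  proof (rule beta_closed_Inter_nonempty)
    show "C ` {W. openin X W \<and> y \<in> W} \<noteq> {}"
      using y by blast
    show "beta_closed S D \<and> D \<noteq> {}" if "D \<in> C ` {W. openin X W \<and> y \<in> W}" for D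
    proof -
      obtain W where "openin X W" "y \<in> W" "D = C W"
        using \<open>D \<in> C ` {W. openin X W \<and> y \<in> W}\<close> by blast
      then show ?thesis
        using left_ideal_Tp_mem_closure[OF y rec L(1)] beta_closed_Tp_preimage[OF L(2) closedin_closure_of y]
        unfolding C_def by auto
    qed
    show "\<exists>D\<in>C ` {W. openin X W \<and> y \<in> W}. D \<subseteq> D\<^sub>1 \<inter> D\<^sub>2"
      if D: "D\<^sub>1 \<in> C ` {W. openin X W \<and> y \<in> W}" "D\<^sub>2 \<in> C ` {W. openin X W \<and> y \<in> W}" for D\<^sub>1 D\<^sub>2
    proof -
      obtain W\<^sub>1 W\<^sub>2 where W: "openin X W\<^sub>1" "y \<in> W\<^sub>1" "openin X W\<^sub>2" "y \<in> W\<^sub>2" "D\<^sub>1 = C W\<^sub>1" "D\<^sub>2 = C W\<^sub>2"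
        using D by blast
      then have "C (W\<^sub>1 \<inter> W\<^sub>2) \<subseteq> D\<^sub>1 \<inter> D\<^sub>2"
        using closure_of_mono[of "W\<^sub>1 \<inter> W\<^sub>2" W\<^sub>1 X] closure_of_mono[of "W\<^sub>1 \<inter> W\<^sub>2" W\<^sub>2 X]
        unfolding C_def by blast
      moreover have "C (W\<^sub>1 \<inter> W\<^sub>2) \<in> C ` {W. openin X W \<and> y \<in> W}"
        using W by blast
      ultimately show ?thesis
        by blast
    qed
  qed
  then obtain q where q: "\<And>W. openin X W \<Longrightarrow> y \<in> W \<Longrightarrow> q \<in> C W"
    by blast
  have "q \<in> L"
    using q[OF openin_topspace y] unfolding C_def by blast
  moreover have "Tp X S T q y = y"
  proof (rule Hausdorff_closure_of_nhds_eq[OF Hausdorff y])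
    show "Tp X S T q y \<in> X closure_of W" if "openin X W" "y \<in> W" for W
      using q[OF that] unfolding C_def by blast
  qed
  ultimately show ?thesis
    by blast
qed

lemma minimal_left_ideal_idempotent_fixes:
  assumes y: "y \<in> topspace X" and rec: "unif_rec_near_zero X S T y" and L: "minimal_left_ideal S L"
  shows "\<exists>u\<in>L. u \<oplus> u = u \<and> Tp X S T u y = y"
proof -
  have LI: "left_ideal S L"
    using minimal_left_ideal_left_ideal[OF L] .
  have uf: "ultrafilter_on S q" if "q \<in> L" for q
    using Oplus_ultrafilter left_idealD(2)[OF LI] that by blast
  have "closed_subsemigroup S {q\<in>L. Tp X S T q y \<in> {y}}"
    unfolding closed_subsemigroup_def
  proof (intro conjI ballI)
    show "beta_closed S {q\<in>L. Tp X S T q y \<in> {y}}"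
      using beta_closed_Tp_preimage[OF beta_closed_minimal_left_ideal[OF L]
          closedin_Hausdorff_singleton[OF Hausdorff y] y] .
    obtain q where "q \<in> L" "Tp X S T q y = y"
      using closed_left_ideal_fixes_unif_rec[OF y rec LI beta_closed_minimal_left_ideal[OF L]] by blast
    then show "{q\<in>L. Tp X S T q y \<in> {y}} \<noteq> {}"
      by blast
  next
    fix a b assume "a \<in> {q\<in>L. Tp X S T q y \<in> {y}}" "b \<in> {q\<in>L. Tp X S T q y \<in> {y}}"
    then have ab: "a \<in> L" "b \<in> L" "Tp X S T a y = y" "Tp X S T b y = y"
      by auto
    then have "a \<oplus> b \<in> L"
      using left_idealD(2,3)[OF LI] by blast
    moreover have "Tp X S T (a \<oplus> b) y = y"
      using Tp_uplus[OF uf uf y] ab by simp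
    ultimately show "a \<oplus> b \<in> {q\<in>L. Tp X S T q y \<in> {y}}"
      by blast
  qed
  then obtain u where "u \<in> {q\<in>L. Tp X S T q y \<in> {y}}" "u \<oplus> u = u"
    using closed_subsemigroup_idempotent by blast
  then show ?thesis
    by blast
qed

lemma unif_rec_proximal_if_Kideal_idempotent:
  assumes x: "x \<in> topspace X" and y: "y \<in> topspace X"
    and u: "u \<in> Kideal S (Oplus S)" "u \<oplus> u = u" "Tp X S T u x = y"
  shows "unif_rec_near_zero X S T y \<and> proximal_near_zero X S T x y"
proof -
  obtain L where L: "minimal_left_ideal S L" "u \<in> L"
    using u(1) unfolding Kideal_Oplus_eq by blast
  then have "u \<in> Oplus S"
    using left_idealD(2)[OF minimal_left_ideal_left_ideal[OF L(1)]] by blast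
  then have "Tp X S T u y = y"
    using Tp_uplus[OF Oplus_ultrafilter Oplus_ultrafilter x] u(2,3) by metis
  then show ?thesis
    using unif_rec_near_zero_if_fixed[OF L y] proximal_near_zero_if_Tp_eq[OF x y \<open>u \<in> Oplus S\<close>] u(3)
    by simp
qed

lemma Kideal_idempotent_if_unif_rec_proximal:
  assumes x: "x \<in> topspace X" and y: "y \<in> topspace X"
    and rec: "unif_rec_near_zero X S T y" and prox: "proximal_near_zero X S T x y"
  shows "\<exists>u\<in>Kideal S (Oplus S). u \<oplus> u = u \<and> Tp X S T u x = y"
proof -
  obtain p where p: "p \<in> Oplus S" "Tp X S T p x = Tp X S T p y"
    using Tp_eq_if_proximal_near_zero[OF x y prox] by blast
  \<comment> \<open>Every element of the left ideal \<open>O\<^sup>+(S) + p\<close> identifies the images of \<open>x\<close> and \<open>y\<close>.\<close>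
  obtain L where L: "minimal_left_ideal S L" "L \<subseteq> (\<lambda>r. r \<oplus> p) ` Oplus S"
    using minimal_left_ideal_exists_in[OF left_ideal_orbit[OF p(1)] beta_closed_orbit[OF p(1)]] by blast
  obtain u where u: "u \<in> L" "u \<oplus> u = u" "Tp X S T u y = y"
    using minimal_left_ideal_idempotent_fixes[OF y rec L(1)] by blast
  obtain r where "r \<in> Oplus S" "u = r \<oplus> p"
    using L(2) u(1) by blast
  then have "Tp X S T u x = y"
    using Tp_uplus[OF Oplus_ultrafilter Oplus_ultrafilter] p x y u(3) by metis
  then show ?thesis
    using u(1,2) L(1) unfolding Kideal_Oplus_eq by blast
qed

end

theorem lemma2p10:
  fixes S :: "real set" and X :: "'a topology" and T :: "real \<Rightarrow> 'a \<Rightarrow> 'a" and x y :: 'a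
  assumes "dense_subsemigroup S"
    and "dynamical_system X S T"
    and "x \<in> topspace X" and "y \<in> topspace X"
  shows "(\<exists>u \<in> Kideal S (Oplus S). uplus S u u = u \<and> Tp X S T u x = y)
     \<longleftrightarrow> (unif_rec_near_zero X S T y \<and> proximal_near_zero X S T x y)"
proof -
  interpret near_zero_dynamics S X T
    using assms(1,2) by unfold_locales
  show ?thesis
    using unif_rec_proximal_if_Kideal_idempotent[OF assms(3,4)]
      Kideal_idempotent_if_unif_rec_proximal[OF assms(3,4)] by blast
qed

end
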